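(* Let $A\in\mathcal{C}^{n\times n}$ be diagonalizable with eigenvalues $\nu_1,\dots,\nu_n$ (with multiplicity) that are at most finite and satisfy $$1=\nu_1[0]>|\nu_2[0]|\ge\dots\ge|\nu_n[0]|.$$ Let $\mathbf x\in\mathcal{C}^n$ be written as $\mathbf x=\mathbf w_1+\dots+\mathbf w_n$, where $\mathbf w_j$ satisfies $A\mathbf w_j=\nu_j\mathbf w_j$, and assume (i) all $\mathbf w_j$ have at most finite entries, and (ii) $\mathbf w_1[0]\ne\mathbf 0$. Let $\boldsymbol\xi_k:=\sum_{j=2}^n(\nu_j/\nu_1)^k\mathbf w_j$. Then: 1. The sequence $(\boldsymbol\xi_k)_k$ is regular (coordinatewise) and $\boldsymbol\xi_k\xrightarrow{wk}\mathbf 0$. 2. $\dfrac1{\|\mathbf w_1+\boldsymbol\xi_k\|_2}\xrightarrow{wk}\dfrac1{\|\mathbf w_1\|_2}$. 2*. If moreover there is a unique index $i_0$ with $|\mathbf w_1^{i_0}[0]|=\max_i|\mathbf w_1^i[0]|$, then $\dfrac1{\|\mathbf w_1+\boldsymbol\xi_k\|_{\max}}\xrightarrow{wk}\dfrac1{\|\mathbf w_1\|_{\max}}$.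
   Context: The Levi-Civita field $\mathcal{R}$ (resp. $\mathcal{C}$) is the set of functions $a:\mathbb Q\to\mathbb R$ (resp. $\mathbb C$) with left-finite support (for every $r\in\mathbb Q$ only finitely many $q<r$ with $a(q)\ne0$), written $a[q]:=a(q)$; addition is pointwise, multiplication is $(ab)[q]=\sum_{q_1+q_2=q}a[q_1]b[q_2]$; $\mathcal{R}$ is a real closed ordered field ($a\succ b$ iff $(a-b)[\lambda(a-b)]>0$) and $\mathcal{C}=\mathcal{R}(i)$ is algebraically closed. $\operatorname{supp}(a)=\{q:a[q]\ne0\}$, $\lambda(a)=\min\operatorname{supp}(a)$ ($\lambda(0)=+\infty$); $a$ is at most finite if $\lambda(a)\ge0$. Absolute value: on $\mathcal{R}$, $|a|=a$ if $a\succeq0$ and $-a$ otherwise; on $\mathcal{C}$, $|a+ib|=\sqrt{a^2+b^2}$ for $a,b\in\mathcal{R}$. For $r\in\mathbb Q$, $\|a\|_r:=\sup_{q\le r}|a[q]|\in\mathbb R$. Weak convergence $a_n\xrightarrow{wk}a$: for every real $r>0$ there is $N_0$ with $\|a_n-a\|_{1/r}<r$ for all $n>N_0$. A sequence is regular if the union of supports of its terms is left-finite. For vectors $\mathbf x=(\mathbf x^1,\dots,\mathbf x^n)^T$, weak convergence and regularity are meant coordinatewise, $\mathbf x[0]:=(\mathbf x^1[0],\dots,\mathbf x^n[0])\in\mathbb C^n$, $\|\mathbf x\|_{\max}=\max_i|\mathbf x^i|$ and $\|\mathbf x\|_2=\sqrt{|\mathbf x^1|^2+\dots+|\mathbf x^n|^2}$.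 *)

theory Defs
  imports Complex_Main
begin

text \<open>Elements of the Levi-Civita field C are represented as functions rat => complex
  with left-finite support; R is the subset of real-valued such functions.
  Vectors in C^n are maps nat => lcf (coordinates 1..n), matrices nat => nat => lcf.\<close>

type_synonym lcf = "rat \<Rightarrow> complex"

definition left_finite :: "rat set \<Rightarrow> bool" where
  "left_finite S \<longleftrightarrow> (\<forall>r. finite {q \<in> S. q < r})"

definition lsupp :: "lcf \<Rightarrow> rat set" where
  "lsupp a = {q. a q \<noteq> 0}"

definition is_LC :: "lcf \<Rightarrow> bool" where
  "is_LC a \<longleftrightarrow> left_finite (lsupp a)"

definition is_LR :: "lcf \<Rightarrow> bool" where
  "is_LR a \<longleftrightarrow> is_LC a \<and> (\<forall>q. Im (a q) = 0)"

definition lc_zero :: lcf where "lc_zero = (\<lambda>q. 0)"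
definition lc_one :: lcf where "lc_one = (\<lambda>q. if q = 0 then 1 else 0)"
definition lc_add :: "lcf \<Rightarrow> lcf \<Rightarrow> lcf" where "lc_add a b = (\<lambda>q. a q + b q)"
definition lc_diff :: "lcf \<Rightarrow> lcf \<Rightarrow> lcf" where "lc_diff a b = (\<lambda>q. a q - b q)"

text \<open>(ab)[q] = sum over q1+q2=q of a[q1] b[q2] (a finite sum for left-finite a, b).\<close>
definition lc_mult :: "lcf \<Rightarrow> lcf \<Rightarrow> lcf" where
  "lc_mult a b = (\<lambda>q. \<Sum>q1\<in>{q1. a q1 \<noteq> 0 \<and> b (q - q1) \<noteq> 0}. a q1 * b (q - q1))"

definition lc_pow :: "lcf \<Rightarrow> nat \<Rightarrow> lcf" where
  "lc_pow a k = ((lc_mult a) ^^ k) lc_one"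

definition lc_inverse :: "lcf \<Rightarrow> lcf" where
  "lc_inverse a = (THE b. is_LC b \<and> lc_mult a b = lc_one)"

definition lc_divide :: "lcf \<Rightarrow> lcf \<Rightarrow> lcf" where
  "lc_divide a b = lc_mult a (lc_inverse b)"

definition lc_sum :: "('i \<Rightarrow> lcf) \<Rightarrow> 'i set \<Rightarrow> lcf" where
  "lc_sum f I = (\<lambda>q. \<Sum>i\<in>I. f i q)"

definition at_most_finite :: "lcf \<Rightarrow> bool" where
  "at_most_finite a \<longleftrightarrow> (\<forall>q. a q \<noteq> 0 \<longrightarrow> 0 \<le> q)"

definition lam :: "lcf \<Rightarrow> rat" where
  "lam a = (LEAST q. a q \<noteq> 0)"

definition lr_pos :: "lcf \<Rightarrow> bool" where
  "lr_pos a \<longleftrightarrow> a \<noteq> lc_zero \<and> Re (a (lam a)) > 0"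

definition lr_nonneg :: "lcf \<Rightarrow> bool" where
  "lr_nonneg a \<longleftrightarrow> a = lc_zero \<or> lr_pos a"

definition lr_le :: "lcf \<Rightarrow> lcf \<Rightarrow> bool" where
  "lr_le a b \<longleftrightarrow> lr_nonneg (lc_diff b a)"

definition lr_sqrt :: "lcf \<Rightarrow> lcf" where
  "lr_sqrt a = (THE y. is_LR y \<and> lr_nonneg y \<and> lc_mult y y = a)"

definition lc_re :: "lcf \<Rightarrow> lcf" where "lc_re z = (\<lambda>q. complex_of_real (Re (z q)))"
definition lc_im :: "lcf \<Rightarrow> lcf" where "lc_im z = (\<lambda>q. complex_of_real (Im (z q)))"

definition lc_abs :: "lcf \<Rightarrow> lcf" where
  "lc_abs z = lr_sqrt (lc_add (lc_mult (lc_re z) (lc_re z)) (lc_mult (lc_im z) (lc_im z)))"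

definition lc_seminorm :: "real \<Rightarrow> lcf \<Rightarrow> real" where
  "lc_seminorm t a = Sup {cmod (a q) | q. real_of_rat q \<le> t}"

definition wk_conv :: "(nat \<Rightarrow> lcf) \<Rightarrow> lcf \<Rightarrow> bool" where
  "wk_conv s a \<longleftrightarrow>
     (\<forall>r::real. r > 0 \<longrightarrow> (\<exists>N0::nat. \<forall>m. m > N0 \<longrightarrow> lc_seminorm (1 / r) (lc_diff (s m) a) < r))"

definition regular_seq :: "(nat \<Rightarrow> lcf) \<Rightarrow> bool" where
  "regular_seq s \<longleftrightarrow> left_finite (\<Union>k. lsupp (s k))"

definition vnorm2 :: "nat \<Rightarrow> (nat \<Rightarrow> lcf) \<Rightarrow> lcf" where
  "vnorm2 n v = lr_sqrt (lc_sum (\<lambda>i. lc_mult (lc_abs (v i)) (lc_abs (v i))) {1..n})"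

definition vnorm_max :: "nat \<Rightarrow> (nat \<Rightarrow> lcf) \<Rightarrow> lcf" where
  "vnorm_max n v = (THE m. (\<exists>i\<in>{1..n}. m = lc_abs (v i)) \<and> (\<forall>i\<in>{1..n}. lr_le (lc_abs (v i)) m))"

definition mat_vec :: "nat \<Rightarrow> (nat \<Rightarrow> nat \<Rightarrow> lcf) \<Rightarrow> (nat \<Rightarrow> lcf) \<Rightarrow> (nat \<Rightarrow> lcf)" where
  "mat_vec n A v = (\<lambda>i. lc_sum (\<lambda>j. lc_mult (A i j) (v j)) {1..n})"

definition mat_mult :: "nat \<Rightarrow> (nat \<Rightarrow> nat \<Rightarrow> lcf) \<Rightarrow> (nat \<Rightarrow> nat \<Rightarrow> lcf) \<Rightarrow> (nat \<Rightarrow> nat \<Rightarrow> lcf)" where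
  "mat_mult n A B = (\<lambda>i k. lc_sum (\<lambda>j. lc_mult (A i j) (B j k)) {1..n})"

definition mat_id :: "nat \<Rightarrow> nat \<Rightarrow> lcf" where
  "mat_id = (\<lambda>i k. if i = k then lc_one else lc_zero)"

definition mat_diag :: "(nat \<Rightarrow> lcf) \<Rightarrow> nat \<Rightarrow> nat \<Rightarrow> lcf" where
  "mat_diag d = (\<lambda>i k. if i = k then d i else lc_zero)"

definition mat_eq_on :: "nat \<Rightarrow> (nat \<Rightarrow> nat \<Rightarrow> lcf) \<Rightarrow> (nat \<Rightarrow> nat \<Rightarrow> lcf) \<Rightarrow> bool" where
  "mat_eq_on n A B \<longleftrightarrow> (\<forall>i\<in>{1..n}. \<forall>k\<in>{1..n}. A i k = B i k)"

definition is_LC_mat :: "nat \<Rightarrow> (nat \<Rightarrow> nat \<Rightarrow> lcf) \<Rightarrow> bool" where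
  "is_LC_mat n A \<longleftrightarrow> (\<forall>i\<in>{1..n}. \<forall>k\<in>{1..n}. is_LC (A i k))"

definition diagonalizable_with :: "nat \<Rightarrow> (nat \<Rightarrow> nat \<Rightarrow> lcf) \<Rightarrow> (nat \<Rightarrow> lcf) \<Rightarrow> bool" where
  "diagonalizable_with n A \<nu> \<longleftrightarrow>
     (\<exists>P Q. is_LC_mat n P \<and> is_LC_mat n Q \<and>
        mat_eq_on n (mat_mult n P Q) mat_id \<and> mat_eq_on n (mat_mult n Q P) mat_id \<and>
        mat_eq_on n A (mat_mult n (mat_mult n P (mat_diag \<nu>)) Q))"

end

theory Submission
  imports Defs
begin

text \<open>All data are supported in one left-finite additive monoid \<open>G\<close> of nonnegative rationals,
  generated by the supports of the \<open>\<nu>_j\<close> and \<open>w_j\<close>. For elements supported in \<open>G\<close> every coefficient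
  of a product is a finite sum, and the coefficients of \<open>1/a\<close> and \<open>sqrt a\<close> are obtained by solving
  \<open>a b = 1\<close> and \<open>b b = a\<close> degree by degree along \<open>G\<close>; so they depend continuously on finitely many
  coefficients of \<open>a\<close>, provided \<open>a[0] \<noteq> 0\<close> (resp. \<open>a[0] > 0\<close>). As \<open>G\<close> has only finitely many
  points below any bound, weak convergence of sequences supported in \<open>G\<close> is coefficientwise
  convergence. For \<open>u = \<nu>_j/\<nu>_1\<close> with \<open>|u[0]| < 1\<close> each coefficient of \<open>u^k\<close> satisfies
  \<open>e_(k+1) = u[0] e_k + o(1)\<close>, whence \<open>\<xi>_k \<rightarrow> 0\<close>. The squared norms of \<open>w_1 + \<xi>_k\<close> then converge
  coefficientwise to that of \<open>w_1\<close>, whose constant term is positive since \<open>w_1[0] \<noteq> 0\<close>. For the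
  maximum norm, the unique dominant index \<open>i_0\<close> of \<open>w_1[0]\<close> stays dominant for \<open>w_1 + \<xi>_k\<close>, so
  eventually \<open>\<parallel>w_1 + \<xi>_k\<parallel>_max = |w_1^i_0 + \<xi>_k^i_0|\<close>.\<close>

section \<open>Left-finite sets\<close>

lemma left_finite_subset: assumes "left_finite B" "A \<subseteq> B" shows "left_finite A"
  unfolding left_finite_def
proof
  fix r
  have "{q \<in> A. q < r} \<subseteq> {q \<in> B. q < r}" using assms(2) by auto
  moreover have "finite {q \<in> B. q < r}" using assms(1) unfolding left_finite_def by blast
  ultimately show "finite {q \<in> A. q < r}" by (rule finite_subset)
qed

lemma left_finite_Un: "left_finite A \<Longrightarrow> left_finite B \<Longrightarrow> left_finite (A \<union> B)"
  unfolding left_finite_def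
proof
  fix r assume "\<forall>r. finite {q \<in> A. q < r}" "\<forall>r. finite {q \<in> B. q < r}"
  then have "finite ({q \<in> A. q < r} \<union> {q \<in> B. q < r})" by auto
  moreover have "{q \<in> A \<union> B. q < r} = {q \<in> A. q < r} \<union> {q \<in> B. q < r}" by auto
  ultimately show "finite {q \<in> A \<union> B. q < r}" by simp
qed

lemma left_finite_UN:
  "finite I \<Longrightarrow> (\<And>i. i \<in> I \<Longrightarrow> left_finite (A i)) \<Longrightarrow> left_finite (\<Union>i\<in>I. A i)"
proof (induction I rule: finite_induct)
  case empty then show ?case by (simp add: left_finite_def)
next
  case (insert x F) then show ?case by (simp add: left_finite_Un)
qed

lemma left_finite_has_min: assumes "left_finite A" "x \<in> A" shows "\<exists>m\<in>A. \<forall>y\<in>A. m \<le> y"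
proof -
  let ?F = "{q \<in> A. q < x + 1}"
  have f: "finite ?F" using assms(1) unfolding left_finite_def by blast
  have x: "x \<in> ?F" using assms(2) by simp
  show ?thesis
  proof (intro bexI ballI)
    show "Min ?F \<in> A" using Min_in[OF f] x by blast
    fix y assume y: "y \<in> A"
    show "Min ?F \<le> y"
    proof (cases "y < x + 1")
      case True then show ?thesis using Min_le[OF f] y by simp
    next
      case False then show ?thesis using Min_le[OF f x] by simp
    qed
  qed
qed

section \<open>Arithmetic of the Levi-Civita field\<close>

lemma lam_eqI: "a p \<noteq> 0 \<Longrightarrow> (\<And>q. a q \<noteq> 0 \<Longrightarrow> p \<le> q) \<Longrightarrow> lam a = p"
  unfolding lam_def by (rule Least_equality) auto

lemma lam_least: assumes "is_LC a" "a \<noteq> lc_zero"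
  shows "a (lam a) \<noteq> 0" "\<And>q. a q \<noteq> 0 \<Longrightarrow> lam a \<le> q"
proof -
  obtain x where x: "a x \<noteq> 0" using assms(2) unfolding lc_zero_def by auto
  obtain m where m: "m \<in> lsupp a" "\<forall>y\<in>lsupp a. m \<le> y"
    using left_finite_has_min[of "lsupp a" x] assms(1) x unfolding is_LC_def lsupp_def by auto
  have "lam a = m" using m by (intro lam_eqI) (auto simp: lsupp_def)
  then show "a (lam a) \<noteq> 0" "\<And>q. a q \<noteq> 0 \<Longrightarrow> lam a \<le> q" using m by (auto simp: lsupp_def)
qed

lemma lam_eq_0: "at_most_finite a \<Longrightarrow> a 0 \<noteq> 0 \<Longrightarrow> lam a = 0"
  by (rule lam_eqI) (auto simp: at_most_finite_def)

lemma lam_uminus: "lam (\<lambda>q. - a q) = lam a"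
  unfolding lam_def by simp

lemma finite_lc_mult_terms:
  assumes "is_LC a" "is_LC b" shows "finite {p. a p \<noteq> 0 \<and> b (q - p) \<noteq> 0}"
proof (cases "b = lc_zero")
  case True then show ?thesis by (simp add: lc_zero_def)
next
  case False
  have "\<And>t. b t \<noteq> 0 \<Longrightarrow> lam b \<le> t" using lam_least[OF assms(2) False] by blast
  then have "{p. a p \<noteq> 0 \<and> b (q - p) \<noteq> 0} \<subseteq> {p \<in> lsupp a. p < q - lam b + 1}"
    by (force simp: lsupp_def)
  moreover have "finite {p \<in> lsupp a. p < q - lam b + 1}"
    using assms(1) unfolding is_LC_def left_finite_def by blast
  ultimately show ?thesis by (rule finite_subset)
qed

lemma lc_mult_eq_sum:
  assumes "finite S" "{p. a p \<noteq> 0 \<and> b (q - p) \<noteq> 0} \<subseteq> S"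
  shows "lc_mult a b q = (\<Sum>p\<in>S. a p * b (q - p))"
  unfolding lc_mult_def using assms by (intro sum.mono_neutral_left) auto

lemma lc_mult_nonzeroD: "lc_mult a b q \<noteq> 0 \<Longrightarrow> \<exists>p. a p \<noteq> 0 \<and> b (q - p) \<noteq> 0"
  unfolding lc_mult_def by (metis (mono_tags, lifting) empty_Collect_eq sum.empty)

lemma lc_mult_zero_left: "lc_mult lc_zero b = lc_zero"
  by (rule ext) (simp add: lc_mult_def lc_zero_def)

lemma lc_mult_commute: "lc_mult a b = lc_mult b a"
proof
  fix q
  show "lc_mult a b q = lc_mult b a q" unfolding lc_mult_def
    by (rule sum.reindex_bij_witness[where i="\<lambda>p. q - p" and j="\<lambda>p. q - p"]) auto
qed

lemma lc_mult_add_right: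
  assumes "is_LC a" "is_LC b" "is_LC c"
  shows "lc_mult a (lc_add b c) = lc_add (lc_mult a b) (lc_mult a c)"
proof
  fix q
  let ?S = "{p. a p \<noteq> 0 \<and> b (q - p) \<noteq> 0} \<union> {p. a p \<noteq> 0 \<and> c (q - p) \<noteq> 0}"
  have f: "finite ?S" using finite_lc_mult_terms assms by blast
  have "lc_mult a (lc_add b c) q = (\<Sum>p\<in>?S. a p * lc_add b c (q - p))"
    by (rule lc_mult_eq_sum[OF f]) (auto simp: lc_add_def)
  also have "\<dots> = (\<Sum>p\<in>?S. a p * b (q - p)) + (\<Sum>p\<in>?S. a p * c (q - p))"
    by (simp add: lc_add_def distrib_left sum.distrib)
  also have "\<dots> = lc_mult a b q + lc_mult a c q"
    using lc_mult_eq_sum[OF f Un_upper1] lc_mult_eq_sum[OF f Un_upper2] by simp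
  finally show "lc_mult a (lc_add b c) q = lc_add (lc_mult a b) (lc_mult a c) q"
    by (simp add: lc_add_def)
qed

lemma lc_mult_diff_right:
  assumes "is_LC a" "is_LC b" "is_LC c"
  shows "lc_mult a (lc_diff b c) = lc_diff (lc_mult a b) (lc_mult a c)"
proof
  fix q
  let ?S = "{p. a p \<noteq> 0 \<and> b (q - p) \<noteq> 0} \<union> {p. a p \<noteq> 0 \<and> c (q - p) \<noteq> 0}"
  have f: "finite ?S" using finite_lc_mult_terms assms by blast
  have "lc_mult a (lc_diff b c) q = (\<Sum>p\<in>?S. a p * lc_diff b c (q - p))"
    by (rule lc_mult_eq_sum[OF f]) (auto simp: lc_diff_def)
  also have "\<dots> = (\<Sum>p\<in>?S. a p * b (q - p)) - (\<Sum>p\<in>?S. a p * c (q - p))"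
    by (simp add: lc_diff_def right_diff_distrib sum_subtractf)
  also have "\<dots> = lc_mult a b q - lc_mult a c q"
    using lc_mult_eq_sum[OF f Un_upper1] lc_mult_eq_sum[OF f Un_upper2] by simp
  finally show "lc_mult a (lc_diff b c) q = lc_diff (lc_mult a b) (lc_mult a c) q"
    by (simp add: lc_diff_def)
qed

lemma lc_mult_below_orders:
  assumes "\<forall>p<l. a p = 0" "\<forall>p<m. b p = 0" "q < l + m"
  shows "lc_mult a b q = 0"
proof (rule ccontr)
  assume "lc_mult a b q \<noteq> 0"
  then obtain p where "a p \<noteq> 0" "b (q - p) \<noteq> 0" using lc_mult_nonzeroD by blast
  then have "l \<le> p" "m \<le> q - p" using assms(1,2) not_le by blast+
  then show False using assms(3) by simp
qed

lemma lc_mult_at_orders: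
  assumes "\<forall>p<l. a p = 0" "\<forall>p<m. b p = 0"
  shows "lc_mult a b (l + m) = a l * b m"
proof -
  have "{p. a p \<noteq> 0 \<and> b (l + m - p) \<noteq> 0} \<subseteq> {l}"
  proof
    fix p assume "p \<in> {p. a p \<noteq> 0 \<and> b (l + m - p) \<noteq> 0}"
    then have "l \<le> p" "m \<le> l + m - p" using assms not_le by blast+
    then show "p \<in> {l}" by simp
  qed
  from lc_mult_eq_sum[OF _ this] show ?thesis by simp
qed

lemma lc_mult_eq_zero_imp:
  assumes "is_LC a" "is_LC b" "lc_mult a b = lc_zero" shows "a = lc_zero \<or> b = lc_zero"
proof (rule ccontr)
  assume "\<not> (a = lc_zero \<or> b = lc_zero)"
  then have na: "a \<noteq> lc_zero" and nb: "b \<noteq> lc_zero" by auto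
  have "\<forall>p<lam a. a p = 0" using lam_least(2)[OF assms(1) na] by (meson not_le)
  moreover have "\<forall>p<lam b. b p = 0" using lam_least(2)[OF assms(2) nb] by (meson not_le)
  ultimately have "lc_mult a b (lam a + lam b) = a (lam a) * b (lam b)" by (rule lc_mult_at_orders)
  also have "\<dots> \<noteq> 0" using lam_least(1)[OF assms(1) na] lam_least(1)[OF assms(2) nb] by simp
  finally show False using assms(3) by (simp add: lc_zero_def)
qed

lemma is_LC_add: "is_LC a \<Longrightarrow> is_LC b \<Longrightarrow> is_LC (lc_add a b)"
  unfolding is_LC_def
  by (erule left_finite_subset[OF left_finite_Un], assumption) (auto simp: lsupp_def lc_add_def)

lemma is_LC_diff: "is_LC a \<Longrightarrow> is_LC b \<Longrightarrow> is_LC (lc_diff a b)"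
  unfolding is_LC_def
  by (erule left_finite_subset[OF left_finite_Un], assumption) (auto simp: lsupp_def lc_diff_def)

lemma lc_inverse_eqI:
  assumes "is_LC a" "is_LC b" "lc_mult a b = lc_one" shows "lc_inverse a = b"
  unfolding lc_inverse_def
proof (rule the_equality)
  show "is_LC b \<and> lc_mult a b = lc_one" using assms by simp
  fix c assume c: "is_LC c \<and> lc_mult a c = lc_one"
  have "lc_mult a (lc_diff c b) = lc_zero"
    using lc_mult_diff_right[OF assms(1) _ assms(2), of c] c assms(3)
    by (simp add: lc_diff_def lc_zero_def)
  moreover have "a \<noteq> lc_zero"
  proof
    assume "a = lc_zero"
    then have "lc_one 0 = lc_zero 0" using assms(3) lc_mult_zero_left by metis
    then show False by (simp add: lc_one_def lc_zero_def)
  qed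
  ultimately have "lc_diff c b = lc_zero"
    using lc_mult_eq_zero_imp[OF assms(1) is_LC_diff] c assms(2) by blast
  then show "c = b" by (auto simp: lc_diff_def lc_zero_def fun_eq_iff)
qed

lemma lr_sqrt_eqI:
  assumes "is_LR y" "lr_nonneg y" "lc_mult y y = a" shows "lr_sqrt a = y"
  unfolding lr_sqrt_def
proof (rule the_equality)
  show "is_LR y \<and> lr_nonneg y \<and> lc_mult y y = a" using assms by simp
  fix z assume z: "is_LR z \<and> lr_nonneg z \<and> lc_mult z z = a"
  have ly: "is_LC y" and lz: "is_LC z" using assms(1) z by (auto simp: is_LR_def)
  have "lc_mult (lc_diff z y) (lc_add z y)
      = lc_diff (lc_mult (lc_add z y) z) (lc_mult (lc_add z y) y)"
    using lc_mult_diff_right[OF is_LC_add[OF lz ly] lz ly] by (simp add: lc_mult_commute)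
  also have "\<dots> = lc_diff (lc_add (lc_mult z z) (lc_mult y z)) (lc_add (lc_mult z y) (lc_mult y y))"
    using lc_mult_add_right[OF lz lz ly] lc_mult_add_right[OF ly lz ly] by (simp add: lc_mult_commute)
  also have "\<dots> = lc_zero"
    using z assms(3) by (simp add: lc_diff_def lc_add_def lc_zero_def fun_eq_iff lc_mult_commute[of y z])
  finally have "lc_diff z y = lc_zero \<or> lc_add z y = lc_zero"
    using lc_mult_eq_zero_imp[OF is_LC_diff[OF lz ly] is_LC_add[OF lz ly]] by blast
  then show "z = y"
  proof
    assume "lc_diff z y = lc_zero" then show ?thesis by (auto simp: lc_diff_def lc_zero_def fun_eq_iff)
  next
    assume "lc_add z y = lc_zero"
    then have zy: "z = (\<lambda>q. - y q)"
      by (auto simp: lc_add_def lc_zero_def fun_eq_iff eq_neg_iff_add_eq_0)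
    show ?thesis
    proof (cases "y = lc_zero")
      case True then show ?thesis using zy by (simp add: lc_zero_def)
    next
      case False
      then have "z \<noteq> lc_zero" using zy by (auto simp: lc_zero_def fun_eq_iff)
      then have "Re (z (lam z)) > 0" using z by (auto simp: lr_nonneg_def lr_pos_def)
      moreover have "Re (y (lam y)) > 0" using assms(2) False by (auto simp: lr_nonneg_def lr_pos_def)
      ultimately show ?thesis using zy lam_uminus[of y] by simp
    qed
  qed
qed

lemma Im_lc_mult_eq_0:
  assumes "\<And>q. Im (a q) = 0" "\<And>q. Im (b q) = 0" shows "Im (lc_mult a b q) = 0"
  unfolding lc_mult_def Im_sum using assms by simp

lemma at_most_finite_diff:
  assumes "at_most_finite a" "at_most_finite b" shows "at_most_finite (lc_diff a b)"
  unfolding at_most_finite_def lc_diff_def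
proof (intro allI impI)
  fix q assume "a q - b q \<noteq> 0"
  then have "a q \<noteq> 0 \<or> b q \<noteq> 0" by auto
  then show "0 \<le> q" using assms unfolding at_most_finite_def by blast
qed

lemma lc_sum_cong: "(\<And>i. i \<in> I \<Longrightarrow> f i = g i) \<Longrightarrow> lc_sum f I = lc_sum g I"
  unfolding lc_sum_def by (rule ext) (rule sum.cong, auto)

section \<open>Left-finite monoids of exponents\<close>

definition add_monoid_gen :: "rat set \<Rightarrow> rat set" where
  "add_monoid_gen S = {sum_list xs | xs. set xs \<subseteq> S}"

definition lf_monoid :: "rat set \<Rightarrow> bool" where
  "lf_monoid G \<longleftrightarrow> left_finite G \<and> 0 \<in> G \<and> (\<forall>x\<in>G. \<forall>y\<in>G. x + y \<in> G) \<and> (\<forall>x\<in>G. 0 \<le> x)"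

lemma length_mult_le_sum_list:
  "(\<forall>x\<in>set xs. m \<le> x) \<Longrightarrow> of_nat (length xs) * m \<le> sum_list (xs :: 'a :: linordered_semiring_1 list)"
  by (induction xs) (auto simp: algebra_simps add_mono)

lemma sum_list_filter_nonzero: "sum_list (filter (\<lambda>x. x \<noteq> 0) xs) = sum_list xs"
  by (induction xs) auto

lemma left_finite_add_monoid_gen:
  assumes S: "left_finite S" "\<forall>x\<in>S. 0 \<le> x" shows "left_finite (add_monoid_gen S)"
  unfolding left_finite_def
proof
  fix r :: rat
  define F where "F = {x\<in>S. 0 < x \<and> x < r}"
  have "F \<subseteq> {q\<in>S. q < r}" unfolding F_def by auto
  then have fF: "finite F" using S(1) finite_subset unfolding left_finite_def by blast
  define m where "m = (if F = {} then 1 else Min F)"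
  have m0: "m > 0" using fF by (auto simp: m_def F_def)
  have mF: "\<forall>x\<in>F. m \<le> x" using fF by (auto simp: m_def)
  define N where "N = nat \<lceil>r / m\<rceil>"
  \<comment> \<open>every nonzero summand is at least \<open>m\<close>, so at most \<open>N\<close> of them fit below \<open>r\<close>\<close>
  have "{q \<in> add_monoid_gen S. q < r} \<subseteq> sum_list ` {xs. set xs \<subseteq> F \<and> length xs \<le> N}"
  proof
    fix q assume "q \<in> {q \<in> add_monoid_gen S. q < r}"
    then obtain xs where xs: "set xs \<subseteq> S" "q = sum_list xs" "q < r" by (auto simp: add_monoid_gen_def)
    define ys where "ys = filter (\<lambda>x. x \<noteq> 0) xs"
    have q: "q = sum_list ys" by (simp only: xs(2) ys_def sum_list_filter_nonzero)
    have nn: "\<And>x. x \<in> set xs \<Longrightarrow> 0 \<le> x" using xs(1) S(2) by auto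
    have ysF: "set ys \<subseteq> F"
    proof
      fix x assume x: "x \<in> set ys"
      then have "x \<in> set xs" "x \<noteq> 0" by (auto simp: ys_def)
      moreover have "x \<le> sum_list xs" using member_le_sum_list[of x xs] nn \<open>x \<in> set xs\<close> by blast
      ultimately show "x \<in> F" using xs nn unfolding F_def by force
    qed
    have "of_nat (length ys) * m \<le> q" using length_mult_le_sum_list[of ys m] ysF mF q by auto
    then have "of_nat (length ys) * m < r" using xs(3) by simp
    then have "of_nat (length ys) < r / m" using m0 by (simp add: field_simps)
    then have "length ys \<le> N" unfolding N_def by linarith
    then show "q \<in> sum_list ` {xs. set xs \<subseteq> F \<and> length xs \<le> N}" using q ysF by auto
  qed
  moreover have "finite (sum_list ` {xs. set xs \<subseteq> F \<and> length xs \<le> N})"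
    using finite_lists_length_le[OF fF] by blast
  ultimately show "finite {q \<in> add_monoid_gen S. q < r}" by (rule finite_subset)
qed

lemma lf_monoid_add_monoid_gen:
  assumes "left_finite S" "\<forall>x\<in>S. 0 \<le> x" shows "lf_monoid (add_monoid_gen S)"
  unfolding lf_monoid_def
proof (intro conjI ballI)
  show "left_finite (add_monoid_gen S)" using left_finite_add_monoid_gen assms by blast
  show "0 \<in> add_monoid_gen S" unfolding add_monoid_gen_def by (auto intro: exI[of _ "[]"])
  fix x y assume "x \<in> add_monoid_gen S" "y \<in> add_monoid_gen S"
  then obtain xs ys where "set xs \<subseteq> S" "x = sum_list xs" "set ys \<subseteq> S" "y = sum_list ys"
    by (auto simp: add_monoid_gen_def)
  then show "x + y \<in> add_monoid_gen S" unfolding add_monoid_gen_def by (auto intro!: exI[of _ "xs @ ys"])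
next
  fix x assume "x \<in> add_monoid_gen S"
  then obtain xs where "set xs \<subseteq> S" "x = sum_list xs" by (auto simp: add_monoid_gen_def)
  then show "0 \<le> x" using assms(2) by (auto intro!: sum_list_nonneg)
qed

lemma subset_add_monoid_gen: "S \<subseteq> add_monoid_gen S"
  unfolding add_monoid_gen_def by (auto intro!: exI[of _ "[x]" for x])

definition supported_in :: "rat set \<Rightarrow> lcf \<Rightarrow> bool" where
  "supported_in G a \<longleftrightarrow> lsupp a \<subseteq> G"

lemma obtain_lf_monoid_supporting:
  assumes "finite F" "\<And>a. a \<in> F \<Longrightarrow> is_LC a \<and> at_most_finite a"
  obtains G where "lf_monoid G" "\<And>a. a \<in> F \<Longrightarrow> supported_in G a"
proof
  let ?S = "\<Union>a\<in>F. lsupp a"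
  have "left_finite ?S" using assms by (intro left_finite_UN) (auto simp: is_LC_def)
  moreover have "\<forall>x\<in>?S. 0 \<le> x" using assms(2) by (auto simp: at_most_finite_def lsupp_def)
  ultimately show "lf_monoid (add_monoid_gen ?S)" by (rule lf_monoid_add_monoid_gen)
  show "supported_in (add_monoid_gen ?S) a" if "a \<in> F" for a
    using that subset_add_monoid_gen[of ?S] unfolding supported_in_def by blast
qed

lemma supported_in_is_LC: "lf_monoid G \<Longrightarrow> supported_in G a \<Longrightarrow> is_LC a"
  unfolding lf_monoid_def supported_in_def is_LC_def using left_finite_subset by blast

lemma supported_in_at_most_finite: "lf_monoid G \<Longrightarrow> supported_in G a \<Longrightarrow> at_most_finite a"
  unfolding lf_monoid_def supported_in_def at_most_finite_def lsupp_def by auto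

lemma supported_in_outside: "supported_in G a \<Longrightarrow> q \<notin> G \<Longrightarrow> a q = 0"
  unfolding supported_in_def lsupp_def by auto

lemma supported_in_zero: "supported_in G lc_zero"
  unfolding supported_in_def lsupp_def lc_zero_def by auto

lemma supported_in_one: "lf_monoid G \<Longrightarrow> supported_in G lc_one"
  unfolding supported_in_def lsupp_def lc_one_def lf_monoid_def by auto

lemma supported_in_add: "supported_in G a \<Longrightarrow> supported_in G b \<Longrightarrow> supported_in G (lc_add a b)"
  unfolding supported_in_def lsupp_def lc_add_def
proof (rule subsetI)
  fix x assume "{q. a q \<noteq> 0} \<subseteq> G" "{q. b q \<noteq> 0} \<subseteq> G" "x \<in> {q. a q + b q \<noteq> 0}"
  moreover have "a x + b x \<noteq> 0 \<Longrightarrow> a x \<noteq> 0 \<or> b x \<noteq> 0" by auto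
  ultimately show "x \<in> G" by blast
qed

lemma supported_in_diff: "supported_in G a \<Longrightarrow> supported_in G b \<Longrightarrow> supported_in G (lc_diff a b)"
  unfolding supported_in_def lsupp_def lc_diff_def
proof (rule subsetI)
  fix x assume "{q. a q \<noteq> 0} \<subseteq> G" "{q. b q \<noteq> 0} \<subseteq> G" "x \<in> {q. a q - b q \<noteq> 0}"
  moreover have "a x - b x \<noteq> 0 \<Longrightarrow> a x \<noteq> 0 \<or> b x \<noteq> 0" by auto
  ultimately show "x \<in> G" by blast
qed

lemma supported_in_re: "supported_in G a \<Longrightarrow> supported_in G (lc_re a)"
  unfolding supported_in_def lsupp_def lc_re_def by auto

lemma supported_in_im: "supported_in G a \<Longrightarrow> supported_in G (lc_im a)"
  unfolding supported_in_def lsupp_def lc_im_def by auto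

lemma supported_in_sum:
  "(\<And>i. i \<in> I \<Longrightarrow> supported_in G (f i)) \<Longrightarrow> supported_in G (lc_sum f I)"
  unfolding supported_in_def lsupp_def lc_sum_def
proof
  fix q assume "q \<in> {q. (\<Sum>i\<in>I. f i q) \<noteq> 0}" and h: "\<And>i. i \<in> I \<Longrightarrow> {q. f i q \<noteq> 0} \<subseteq> G"
  then obtain i where "i \<in> I" "f i q \<noteq> 0" by (metis (mono_tags, lifting) mem_Collect_eq sum.neutral)
  then show "q \<in> G" using h by blast
qed

lemma supported_in_mult:
  assumes "lf_monoid G" "supported_in G a" "supported_in G b" shows "supported_in G (lc_mult a b)"
  unfolding supported_in_def lsupp_def
proof
  fix q assume "q \<in> {q. lc_mult a b q \<noteq> 0}"
  then obtain p where "a p \<noteq> 0" "b (q - p) \<noteq> 0" using lc_mult_nonzeroD by blast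
  then have "p \<in> G" "q - p \<in> G" using assms(2,3) by (auto simp: supported_in_def lsupp_def)
  then show "q \<in> G" using assms(1) unfolding lf_monoid_def by (metis diff_add_cancel)
qed

lemma lc_pow_Suc: "lc_pow a (Suc k) = lc_mult a (lc_pow a k)"
  by (simp add: lc_pow_def)

lemma supported_in_pow: "lf_monoid G \<Longrightarrow> supported_in G a \<Longrightarrow> supported_in G (lc_pow a k)"
  by (induction k) (auto simp: lc_pow_def supported_in_one supported_in_mult)

lemma regular_seq_if_supported_in:
  "lf_monoid G \<Longrightarrow> (\<And>k. supported_in G (s k)) \<Longrightarrow> regular_seq s"
  unfolding regular_seq_def lf_monoid_def supported_in_def
  by (rule left_finite_subset[of G]) auto

definition splits :: "rat set \<Rightarrow> rat \<Rightarrow> rat set" where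
  "splits G q = {p \<in> G. p \<le> q \<and> q - p \<in> G}"

lemma finite_splits: "lf_monoid G \<Longrightarrow> finite (splits G q)"
  unfolding lf_monoid_def left_finite_def splits_def
  by (rule finite_subset[of _ "{p \<in> G. p < q + 1}"]) auto

lemma lc_mult_eq_sum_splits:
  assumes "lf_monoid G" "supported_in G a" "supported_in G b"
  shows "lc_mult a b q = (\<Sum>p\<in>splits G q. a p * b (q - p))"
proof (rule lc_mult_eq_sum[OF finite_splits[OF assms(1)]])
  show "{p. a p \<noteq> 0 \<and> b (q - p) \<noteq> 0} \<subseteq> splits G q"
  proof
    fix p assume "p \<in> {p. a p \<noteq> 0 \<and> b (q - p) \<noteq> 0}"
    then have "p \<in> G" "q - p \<in> G" using assms(2,3) by (auto simp: supported_in_def lsupp_def)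
    then show "p \<in> splits G q" using assms(1) unfolding splits_def lf_monoid_def by fastforce
  qed
qed

lemma splits_outside: assumes "lf_monoid G" "q \<notin> G" shows "splits G q = {}"
  using assms unfolding splits_def lf_monoid_def by (auto, metis add.commute diff_add_cancel)

lemma splits_0: "lf_monoid G \<Longrightarrow> splits G 0 = {0}"
  unfolding lf_monoid_def splits_def by force

lemma splits_eq_insert_0:
  assumes "lf_monoid G" "q \<in> G"
  shows "splits G q = insert 0 {p \<in> G. 0 < p \<and> p \<le> q \<and> q - p \<in> G}"
  using assms unfolding lf_monoid_def splits_def by force

lemma splits_eq_insert_0_q:
  assumes "lf_monoid G" "q \<in> G" "q \<noteq> 0"
  shows "splits G q = insert 0 (insert q {p \<in> G. 0 < p \<and> p < q \<and> q - p \<in> G})"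
    "0 \<notin> insert q {p \<in> G. 0 < p \<and> p < q \<and> q - p \<in> G}"
  using assms unfolding lf_monoid_def splits_def by force+

lemma lc_mult_coeff_0:
  "lf_monoid G \<Longrightarrow> supported_in G a \<Longrightarrow> supported_in G b \<Longrightarrow> lc_mult a b 0 = a 0 * b 0"
  using lc_mult_eq_sum_splits splits_0 by simp

lemma lc_mult_split_coeff:
  assumes G: "lf_monoid G" "q \<in> G" and "supported_in G a" "supported_in G b"
  shows "lc_mult a b q = a 0 * b q + (\<Sum>p\<in>{p \<in> G. 0 < p \<and> p \<le> q \<and> q - p \<in> G}. a p * b (q - p))"
proof -
  have "finite {p \<in> G. 0 < p \<and> p \<le> q \<and> q - p \<in> G}"
    using finite_splits[OF G(1), of q] splits_eq_insert_0[OF G] by simp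
  then show ?thesis using lc_mult_eq_sum_splits[OF G(1) assms(3,4)] splits_eq_insert_0[OF G] by simp
qed

lemma card_below_less:
  assumes "lf_monoid G" "p \<in> G" "p < q" shows "card {x \<in> G. x < p} < card {x \<in> G. x < q}"
proof (rule psubset_card_mono)
  show "finite {x \<in> G. x < q}" using assms(1) unfolding lf_monoid_def left_finite_def by blast
  show "{x \<in> G. x < p} \<subset> {x \<in> G. x < q}" using assms by auto
qed

section \<open>Inverses and square roots computed degree by degree\<close>

function inv_coeff :: "rat set \<Rightarrow> lcf \<Rightarrow> rat \<Rightarrow> complex" where
  "inv_coeff G a q = (if lf_monoid G \<and> q \<in> G then
     (if q = 0 then 1 / a 0 else
        - (\<Sum>p\<in>{p\<in>G. 0 < p \<and> p \<le> q \<and> q - p \<in> G}. a p * inv_coeff G a (q - p)) / a 0)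
   else 0)"
  by pat_completeness auto
termination
  by (relation "measure (\<lambda>(G,a,q). card {p\<in>G. p < q})") (auto intro!: card_below_less)

function sqrt_coeff :: "rat set \<Rightarrow> lcf \<Rightarrow> rat \<Rightarrow> real" where
  "sqrt_coeff G a q = (if lf_monoid G \<and> q \<in> G then
     (if q = 0 then sqrt (Re (a 0)) else
        (Re (a q) - (\<Sum>p\<in>{p\<in>G. 0 < p \<and> p < q \<and> q - p \<in> G}. sqrt_coeff G a p * sqrt_coeff G a (q - p)))
          / (2 * sqrt_coeff G a 0))
   else 0)"
  by pat_completeness auto
termination
proof (relation "measure (\<lambda>(G,a,q). card {p\<in>G. p < q})")
  fix G a q assume h: "lf_monoid G \<and> q \<in> G" "q \<noteq> 0"
  then have "0 \<in> G" "0 < q" unfolding lf_monoid_def by (auto simp: order_le_less)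
  then show "((G, a, 0), G, a, q) \<in> measure (\<lambda>(G,a,q). card {p\<in>G. p < q})"
    using h by (auto intro!: card_below_less)
qed (auto intro!: card_below_less)

declare inv_coeff.simps [simp del] sqrt_coeff.simps [simp del]

definition inv_series :: "rat set \<Rightarrow> lcf \<Rightarrow> lcf" where
  "inv_series G a = (\<lambda>q. inv_coeff G a q)"

definition sqrt_series :: "rat set \<Rightarrow> lcf \<Rightarrow> lcf" where
  "sqrt_series G a = (\<lambda>q. complex_of_real (sqrt_coeff G a q))"

lemma inv_coeff_outside: "q \<notin> G \<Longrightarrow> inv_coeff G a q = 0"
  by (subst inv_coeff.simps) simp

lemma sqrt_coeff_outside: "q \<notin> G \<Longrightarrow> sqrt_coeff G a q = 0"
  by (subst sqrt_coeff.simps) simp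

lemma inv_coeff_0: "lf_monoid G \<Longrightarrow> inv_coeff G a 0 = 1 / a 0"
  by (subst inv_coeff.simps) (simp add: lf_monoid_def)

lemma sqrt_coeff_0: "lf_monoid G \<Longrightarrow> sqrt_coeff G a 0 = sqrt (Re (a 0))"
  by (subst sqrt_coeff.simps) (simp add: lf_monoid_def)

lemma inv_coeff_pos: "lf_monoid G \<Longrightarrow> q \<in> G \<Longrightarrow> q \<noteq> 0 \<Longrightarrow> inv_coeff G a q =
   - (\<Sum>p\<in>{p\<in>G. 0 < p \<and> p \<le> q \<and> q - p \<in> G}. a p * inv_coeff G a (q - p)) / a 0"
  by (subst inv_coeff.simps) simp

lemma sqrt_coeff_pos: "lf_monoid G \<Longrightarrow> q \<in> G \<Longrightarrow> q \<noteq> 0 \<Longrightarrow> sqrt_coeff G a q =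
   (Re (a q) - (\<Sum>p\<in>{p\<in>G. 0 < p \<and> p < q \<and> q - p \<in> G}. sqrt_coeff G a p * sqrt_coeff G a (q - p)))
     / (2 * sqrt_coeff G a 0)"
  by (subst sqrt_coeff.simps) simp

lemma supported_in_inv_series: "supported_in G (inv_series G a)"
  unfolding supported_in_def lsupp_def inv_series_def using inv_coeff_outside by blast

lemma supported_in_sqrt_series: "supported_in G (sqrt_series G a)"
  unfolding supported_in_def lsupp_def sqrt_series_def using sqrt_coeff_outside by fastforce

lemma lc_mult_inv_series:
  assumes G: "lf_monoid G" and a: "supported_in G a" "a 0 \<noteq> 0"
  shows "lc_mult a (inv_series G a) = lc_one"
proof
  fix q
  show "lc_mult a (inv_series G a) q = lc_one q"
  proof (cases "q \<in> G \<and> q \<noteq> 0")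
    case True
    then show ?thesis
      using lc_mult_split_coeff[OF G _ a(1) supported_in_inv_series] inv_coeff_pos[OF G, of q a] a(2)
      by (simp add: inv_series_def lc_one_def)
  next
    case False
    then show ?thesis
      using lc_mult_eq_sum_splits[OF G a(1) supported_in_inv_series] splits_outside[OF G]
        splits_0[OF G] inv_coeff_0[OF G] a(2) G
      by (auto simp: inv_series_def lc_one_def lf_monoid_def)
  qed
qed

lemma lc_mult_sqrt_series_self:
  assumes G: "lf_monoid G" and a: "supported_in G a" "Re (a 0) > 0" "\<And>q. Im (a q) = 0"
  shows "lc_mult (sqrt_series G a) (sqrt_series G a) = a"
proof
  fix q
  have eq: "lc_mult (sqrt_series G a) (sqrt_series G a) q
      = of_real (\<Sum>p\<in>splits G q. sqrt_coeff G a p * sqrt_coeff G a (q - p))"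
    using lc_mult_eq_sum_splits[OF G supported_in_sqrt_series supported_in_sqrt_series]
    by (simp add: sqrt_series_def)
  have aq: "a q = of_real (Re (a q))" using a(3) by (simp add: complex_eq_iff)
  have s0: "sqrt_coeff G a 0 > 0" using sqrt_coeff_0[OF G] a(2) by simp
  consider "q \<notin> G" | "q = 0" | "q \<in> G" "q \<noteq> 0" by blast
  then show "lc_mult (sqrt_series G a) (sqrt_series G a) q = a q"
  proof cases
    case 1
    then show ?thesis using eq splits_outside[OF G] supported_in_outside[OF a(1)] by simp
  next
    case 2
    then show ?thesis using eq splits_0[OF G] sqrt_coeff_0[OF G, of a] a(2) aq
      by (simp flip: of_real_mult)
  next
    case 3
    let ?M = "{p\<in>G. 0 < p \<and> p < q \<and> q - p \<in> G}"
    have "finite ?M" using finite_splits[OF G, of q] splits_eq_insert_0_q(1)[OF G 3] by simp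
    then have "(\<Sum>p\<in>splits G q. sqrt_coeff G a p * sqrt_coeff G a (q - p))
        = sqrt_coeff G a 0 * sqrt_coeff G a q
          + (sqrt_coeff G a q * sqrt_coeff G a 0 + (\<Sum>p\<in>?M. sqrt_coeff G a p * sqrt_coeff G a (q - p)))"
      using splits_eq_insert_0_q[OF G 3] by simp
    also have "\<dots> = Re (a q)" using sqrt_coeff_pos[OF G 3, of a] s0 by (simp add: field_simps)
    finally show ?thesis using eq aq by simp
  qed
qed

lemma tendsto_inv_coeff:
  assumes G: "lf_monoid G" and t: "\<And>q. (\<lambda>k. a k q) \<longlonglongrightarrow> b q" and b0: "b 0 \<noteq> 0"
  shows "(\<lambda>k. inv_coeff G (a k) q) \<longlonglongrightarrow> inv_coeff G b q"
proof (induction "card {p\<in>G. p < q}" arbitrary: q rule: less_induct)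
  case less
  consider "q \<notin> G" | "q = 0" | "q \<in> G" "q \<noteq> 0" by blast
  then show ?case
  proof cases
    case 1 then show ?thesis using inv_coeff_outside by simp
  next
    case 2 then show ?thesis using inv_coeff_0[OF G] tendsto_divide[OF tendsto_const t b0, of 1] by simp
  next
    case 3
    have "(\<lambda>k. inv_coeff G (a k) (q - p)) \<longlonglongrightarrow> inv_coeff G b (q - p)"
      if "p \<in> {p\<in>G. 0 < p \<and> p \<le> q \<and> q - p \<in> G}" for p
      using less card_below_less[OF G] that by auto
    then have "(\<lambda>k. - (\<Sum>p\<in>{p\<in>G. 0 < p \<and> p \<le> q \<and> q - p \<in> G}. a k p * inv_coeff G (a k) (q - p)) / a k 0)
       \<longlonglongrightarrow> - (\<Sum>p\<in>{p\<in>G. 0 < p \<and> p \<le> q \<and> q - p \<in> G}. b p * inv_coeff G b (q - p)) / b 0"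
      by (intro tendsto_intros t b0)
    then show ?thesis using inv_coeff_pos[OF G 3] by simp
  qed
qed

lemma tendsto_sqrt_coeff:
  assumes G: "lf_monoid G" and t: "\<And>q. (\<lambda>k. a k q) \<longlonglongrightarrow> b q" and b0: "Re (b 0) > 0"
  shows "(\<lambda>k. sqrt_coeff G (a k) q) \<longlonglongrightarrow> sqrt_coeff G b q"
proof (induction "card {p\<in>G. p < q}" arbitrary: q rule: less_induct)
  case less
  have lim0: "(\<lambda>k. sqrt_coeff G (a k) 0) \<longlonglongrightarrow> sqrt_coeff G b 0"
    using sqrt_coeff_0[OF G] tendsto_real_sqrt[OF tendsto_Re[OF t]] by simp
  consider "q \<notin> G" | "q = 0" | "q \<in> G" "q \<noteq> 0" by blast
  then show ?case
  proof cases
    case 1 then show ?thesis using sqrt_coeff_outside by simp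
  next
    case 2 then show ?thesis using lim0 by simp
  next
    case 3
    have "2 * sqrt_coeff G b 0 \<noteq> 0" using sqrt_coeff_0[OF G] b0 by simp
    moreover have "(\<lambda>k. sqrt_coeff G (a k) p) \<longlonglongrightarrow> sqrt_coeff G b p"
       "(\<lambda>k. sqrt_coeff G (a k) (q - p)) \<longlonglongrightarrow> sqrt_coeff G b (q - p)"
      if "p \<in> {p\<in>G. 0 < p \<and> p < q \<and> q - p \<in> G}" for p
      using less card_below_less[OF G] that by auto
    ultimately have "(\<lambda>k. (Re (a k q) - (\<Sum>p\<in>{p\<in>G. 0 < p \<and> p < q \<and> q - p \<in> G}.
          sqrt_coeff G (a k) p * sqrt_coeff G (a k) (q - p))) / (2 * sqrt_coeff G (a k) 0))
       \<longlonglongrightarrow> (Re (b q) - (\<Sum>p\<in>{p\<in>G. 0 < p \<and> p < q \<and> q - p \<in> G}.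
          sqrt_coeff G b p * sqrt_coeff G b (q - p))) / (2 * sqrt_coeff G b 0)"
      by (intro tendsto_intros t lim0)
    then show ?thesis using sqrt_coeff_pos[OF G 3] by simp
  qed
qed

lemma lc_inverse_eq_inv_series:
  assumes G: "lf_monoid G" and a: "supported_in G a" "a 0 \<noteq> 0"
  shows "lc_inverse a = inv_series G a"
  by (rule lc_inverse_eqI[OF supported_in_is_LC[OF G a(1)] supported_in_is_LC[OF G supported_in_inv_series]
        lc_mult_inv_series[OF G a]])

lemma lr_sqrt_eq_sqrt_series:
  assumes G: "lf_monoid G" and a: "supported_in G a" "Re (a 0) > 0" "\<And>q. Im (a q) = 0"
  shows "lr_sqrt a = sqrt_series G a"
proof (rule lr_sqrt_eqI)
  show "is_LR (sqrt_series G a)"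
    unfolding is_LR_def using supported_in_is_LC[OF G supported_in_sqrt_series] by (simp add: sqrt_series_def)
  have v0: "sqrt_series G a 0 = of_real (sqrt (Re (a 0)))" by (simp add: sqrt_series_def sqrt_coeff_0[OF G])
  then have "sqrt_series G a 0 \<noteq> 0" using a(2) by simp
  moreover from this have "lam (sqrt_series G a) = 0"
    using lam_eq_0 supported_in_at_most_finite[OF G supported_in_sqrt_series] by blast
  ultimately show "lr_nonneg (sqrt_series G a)"
    unfolding lr_nonneg_def lr_pos_def using v0 a(2) by (auto simp: lc_zero_def)
  show "lc_mult (sqrt_series G a) (sqrt_series G a) = a" by (rule lc_mult_sqrt_series_self[OF G a])
qed

lemma lc_divide_supported_in:
  assumes G: "lf_monoid G" and "supported_in G a" "supported_in G b" "b 0 \<noteq> 0"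
  shows "supported_in G (lc_divide a b)" "lc_divide a b 0 = a 0 / b 0"
  unfolding lc_divide_def lc_inverse_eq_inv_series[OF G assms(3,4)]
  using supported_in_mult[OF G assms(2) supported_in_inv_series] lc_mult_coeff_0[OF G assms(2) supported_in_inv_series]
    inv_coeff_0[OF G] by (auto simp: inv_series_def)

section \<open>Weak convergence\<close>

lemma lc_seminorm_less:
  assumes G: "lf_monoid G" and d: "supported_in G d" and r: "r > 0"
    and small: "\<And>q. q \<in> G \<Longrightarrow> real_of_rat q \<le> t \<Longrightarrow> cmod (d q) < r"
  shows "lc_seminorm t d < r"
proof -
  define X where "X = {cmod (d q) | q. real_of_rat q \<le> t}"
  obtain N :: nat where N: "t < of_nat N" using reals_Archimedean2 by blast
  have "{q \<in> G. real_of_rat q \<le> t} \<subseteq> {q \<in> G. q < of_nat N}"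
  proof (intro subsetI CollectI conjI; elim CollectE conjE)
    fix q assume "q \<in> G" "real_of_rat q \<le> t"
    then have "real_of_rat q < real_of_rat (of_nat N)" using N by simp
    then show "q \<in> G" "q < of_nat N" using \<open>q \<in> G\<close> by (simp_all only: of_rat_less)
  qed
  then have fin: "finite {q \<in> G. real_of_rat q \<le> t}"
    using G finite_subset unfolding lf_monoid_def left_finite_def by blast
  \<comment> \<open>off \<open>G\<close> the coefficients vanish, so the supremum is a maximum over finitely many values\<close>
  have XS: "X \<subseteq> insert 0 ((\<lambda>q. cmod (d q)) ` {q \<in> G. real_of_rat q \<le> t})"
    using supported_in_outside[OF d] unfolding X_def by (auto simp: image_iff) (metis norm_zero)
  then have "finite X" using fin finite_subset by blast
  moreover have "cmod (d (of_int \<lfloor>t\<rfloor>)) \<in> X" unfolding X_def by force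
  then have "X \<noteq> {}" by blast
  ultimately have "Sup X = Max X" "Max X \<in> X" by (simp_all add: cSup_eq_Max)
  moreover have "x < r" if "x \<in> X" for x
    using that XS small r by auto
  ultimately show ?thesis unfolding lc_seminorm_def X_def[symmetric] by simp
qed

lemma wk_conv_if_coeff_tendsto:
  assumes G: "lf_monoid G" and ev: "eventually (\<lambda>k. supported_in G (s k)) sequentially"
    and aG: "supported_in G a" and t: "\<And>q. (\<lambda>k. s k q) \<longlonglongrightarrow> a q"
  shows "wk_conv s a"
  unfolding wk_conv_def
proof (intro allI impI)
  fix r :: real assume r: "r > 0"
  obtain N :: nat where N: "1 / r < of_nat N" using reals_Archimedean2 by blast
  define F where "F = {q \<in> G. q < of_nat N}"
  have "finite F" using G unfolding F_def lf_monoid_def left_finite_def by blast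
  moreover have "\<forall>q\<in>F. eventually (\<lambda>k. cmod (s k q - a q) < r) sequentially"
    using t r unfolding tendsto_iff dist_norm by blast
  ultimately have "eventually (\<lambda>k. \<forall>q\<in>F. cmod (s k q - a q) < r) sequentially"
    by (rule eventually_ball_finite)
  with ev have "eventually (\<lambda>k. supported_in G (s k) \<and> (\<forall>q\<in>F. cmod (s k q - a q) < r)) sequentially"
    by (rule eventually_conj)
  then obtain N0 where N0: "\<forall>k\<ge>N0. supported_in G (s k) \<and> (\<forall>q\<in>F. cmod (s k q - a q) < r)"
    unfolding eventually_sequentially by blast
  have "lc_seminorm (1 / r) (lc_diff (s m) a) < r" if "m > N0" for m
  proof (rule lc_seminorm_less[OF G supported_in_diff[OF _ aG] r])
    show "supported_in G (s m)" using N0 that by simp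
    fix q assume "q \<in> G" "real_of_rat q \<le> 1 / r"
    moreover have "real_of_rat q < real_of_rat (of_nat N)" using N \<open>real_of_rat q \<le> 1 / r\<close> by simp
    ultimately have "q \<in> F" unfolding F_def of_rat_less by simp
    then show "cmod (lc_diff (s m) a q) < r" using N0 that by (simp add: lc_diff_def)
  qed
  then show "\<exists>N0. \<forall>m>N0. lc_seminorm (1 / r) (lc_diff (s m) a) < r" by blast
qed

lemma wk_conv_cong_eventually:
  assumes "wk_conv s a" "eventually (\<lambda>k. s k = t k) sequentially"
  shows "wk_conv t a"
  unfolding wk_conv_def
proof (intro allI impI)
  fix r :: real assume "r > 0"
  then obtain N0 where N0: "\<forall>m>N0. lc_seminorm (1 / r) (lc_diff (s m) a) < r"
    using assms(1) unfolding wk_conv_def by blast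
  obtain N1 where N1: "\<forall>m\<ge>N1. s m = t m" using assms(2) unfolding eventually_sequentially by blast
  show "\<exists>N. \<forall>m>N. lc_seminorm (1 / r) (lc_diff (t m) a) < r"
    using N0 N1 by (intro exI[of _ "max N0 N1"]) auto
qed

lemma tendsto_lc_mult_coeff:
  assumes G: "lf_monoid G" and aG: "\<And>k. supported_in G (a k)" "supported_in G A"
    and bG: "\<And>k. supported_in G (b k)" "supported_in G B"
    and ta: "\<And>q. (\<lambda>k. a k q) \<longlonglongrightarrow> A q" and tb: "\<And>q. (\<lambda>k. b k q) \<longlonglongrightarrow> B q"
  shows "(\<lambda>k. lc_mult (a k) (b k) q) \<longlonglongrightarrow> lc_mult A B q"
proof -
  have "(\<lambda>k. \<Sum>p\<in>splits G q. a k p * b k (q - p)) \<longlonglongrightarrow> (\<Sum>p\<in>splits G q. A p * B (q - p))"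
    by (intro tendsto_intros ta tb)
  then show ?thesis
    using lc_mult_eq_sum_splits[OF G aG(1) bG(1)] lc_mult_eq_sum_splits[OF G aG(2) bG(2)] by simp
qed

lemma linear_recurrence_tendsto_zero:
  fixes e f :: "nat \<Rightarrow> 'a :: real_normed_field"
  assumes c: "norm c < 1" and rec: "\<And>k. e (Suc k) = c * e k + f k" and f: "f \<longlonglongrightarrow> 0"
  shows "e \<longlonglongrightarrow> 0"
proof (rule LIMSEQ_I)
  fix \<epsilon> :: real assume \<epsilon>: "\<epsilon> > 0"
  define \<delta> where "\<delta> = \<epsilon> * (1 - norm c) / 2"
  have "\<delta> > 0" using \<epsilon> c by (simp add: \<delta>_def)
  then obtain K where K: "\<And>k. k \<ge> K \<Longrightarrow> norm (f k) < \<delta>" using LIMSEQ_D[OF f] by auto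
  \<comment> \<open>the choice of \<open>\<delta>\<close> makes \<open>\<epsilon>/2\<close> a fixed point of \<open>y \<mapsto> |c| y + \<delta>\<close>\<close>
  have bound: "norm (e (K + j)) \<le> norm c ^ j * norm (e K) + \<epsilon> / 2" for j
  proof (induction j)
    case 0 then show ?case using \<epsilon> by simp
  next
    case (Suc j)
    have "norm (e (K + Suc j)) \<le> norm c * norm (e (K + j)) + norm (f (K + j))"
      using rec[of "K + j"] norm_triangle_ineq[of "c * e (K + j)" "f (K + j)"] by (simp add: norm_mult)
    also have "\<dots> \<le> norm c * (norm c ^ j * norm (e K) + \<epsilon> / 2) + \<delta>"
      using Suc K[of "K + j"] by (intro add_mono mult_left_mono) auto
    also have "\<dots> = norm c ^ Suc j * norm (e K) + \<epsilon> / 2"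
      by (simp add: \<delta>_def field_simps)
    finally show ?case .
  qed
  have "(\<lambda>j. norm c ^ j * norm (e K)) \<longlonglongrightarrow> 0"
    by (intro tendsto_mult_left_zero LIMSEQ_power_zero) (use c in simp)
  then obtain J where J: "\<And>j. j \<ge> J \<Longrightarrow> norm c ^ j * norm (e K) < \<epsilon> / 2"
    using LIMSEQ_D[of _ 0 "\<epsilon>/2"] \<epsilon> by fastforce
  show "\<exists>no. \<forall>n\<ge>no. norm (e n - 0) < \<epsilon>"
  proof (intro exI allI impI)
    fix n assume "n \<ge> K + J"
    then have "norm (e n) \<le> norm c ^ (n - K) * norm (e K) + \<epsilon> / 2" "n - K \<ge> J"
      using bound[of "n - K"] by auto
    then show "norm (e n - 0) < \<epsilon>" using J by fastforce
  qed
qed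

lemma tendsto_lc_pow_coeff_zero:
  assumes G: "lf_monoid G" and u: "supported_in G u" "cmod (u 0) < 1"
  shows "(\<lambda>k. lc_pow u k q) \<longlonglongrightarrow> 0"
proof (induction "card {p\<in>G. p < q}" arbitrary: q rule: less_induct)
  case less
  show ?case
  proof (cases "q \<in> G")
    case False then show ?thesis using supported_in_outside[OF supported_in_pow[OF G u(1)] False] by simp
  next
    case qG: True
    let ?M = "{p\<in>G. 0 < p \<and> p \<le> q \<and> q - p \<in> G}"
    let ?f = "\<lambda>k. \<Sum>p\<in>?M. u p * lc_pow u k (q - p)"
    have "(\<lambda>k. lc_pow u k (q - p)) \<longlonglongrightarrow> 0" if "p \<in> ?M" for p
      using less card_below_less[OF G] that by auto
    then have f: "?f \<longlonglongrightarrow> 0"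
      by (intro tendsto_null_sum tendsto_mult_right_zero)
    have rec: "lc_pow u (Suc k) q = u 0 * lc_pow u k q + ?f k" for k
      using lc_mult_split_coeff[OF G qG u(1) supported_in_pow[OF G u(1)]] by (simp add: lc_pow_Suc)
    show ?thesis
      by (rule linear_recurrence_tendsto_zero[where e="\<lambda>k. lc_pow u k q", OF u(2) rec f])
  qed
qed

lemma lc_power_combination_vanishes:
  assumes G: "lf_monoid G"
    and u: "\<And>j. j \<in> J \<Longrightarrow> supported_in G (u j) \<and> cmod (u j 0) < 1"
    and w: "\<And>j. j \<in> J \<Longrightarrow> supported_in G (w j)"
  shows "supported_in G (lc_sum (\<lambda>j. lc_mult (lc_pow (u j) k) (w j)) J)"
    and "(\<lambda>k. lc_sum (\<lambda>j. lc_mult (lc_pow (u j) k) (w j)) J q) \<longlonglongrightarrow> 0"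
    and "regular_seq (\<lambda>k. lc_sum (\<lambda>j. lc_mult (lc_pow (u j) k) (w j)) J)"
    and "wk_conv (\<lambda>k. lc_sum (\<lambda>j. lc_mult (lc_pow (u j) k) (w j)) J) lc_zero"
proof -
  show supp: "supported_in G (lc_sum (\<lambda>j. lc_mult (lc_pow (u j) k) (w j)) J)" for k
    using u w by (intro supported_in_sum supported_in_mult[OF G] supported_in_pow[OF G]) auto
  then show "regular_seq (\<lambda>k. lc_sum (\<lambda>j. lc_mult (lc_pow (u j) k) (w j)) J)"
    by (rule regular_seq_if_supported_in[OF G])
  have "(\<lambda>k. lc_mult (lc_pow (u j) k) (w j) q) \<longlonglongrightarrow> 0" if "j \<in> J" for j q
  proof -
    have "(\<lambda>k. lc_mult (lc_pow (u j) k) (w j) q) \<longlonglongrightarrow> lc_mult lc_zero (w j) q"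
      using u[OF that] w[OF that]
      by (intro tendsto_lc_mult_coeff[OF G] supported_in_pow[OF G] supported_in_zero tendsto_const)
         (auto simp: lc_zero_def intro: tendsto_lc_pow_coeff_zero[OF G])
    then show ?thesis unfolding lc_mult_zero_left by (simp add: lc_zero_def)
  qed
  then show lim: "(\<lambda>k. lc_sum (\<lambda>j. lc_mult (lc_pow (u j) k) (w j)) J q) \<longlonglongrightarrow> 0" for q
    unfolding lc_sum_def by (rule tendsto_null_sum)
  have "(\<lambda>k. lc_sum (\<lambda>j. lc_mult (lc_pow (u j) k) (w j)) J q) \<longlonglongrightarrow> lc_zero q" for q
    unfolding lc_zero_def by (rule lim)
  then show "wk_conv (\<lambda>k. lc_sum (\<lambda>j. lc_mult (lc_pow (u j) k) (w j)) J) lc_zero"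
    by (intro wk_conv_if_coeff_tendsto[OF G _ supported_in_zero] always_eventually allI supp)
qed

lemma wk_conv_inverse_sqrt:
  assumes G: "lf_monoid G" and aG: "\<And>k. supported_in G (a k)" and bG: "supported_in G b"
    and t: "\<And>q. (\<lambda>k. a k q) \<longlonglongrightarrow> b q" and b0: "Re (b 0) > 0"
    and a_real: "\<And>k q. Im (a k q) = 0" and b_real: "\<And>q. Im (b q) = 0"
  shows "wk_conv (\<lambda>k. lc_inverse (lr_sqrt (a k))) (lc_inverse (lr_sqrt b))"
proof -
  have sqrt0: "sqrt_series G c 0 \<noteq> 0" if "Re (c 0) > 0" for c
    using that by (simp add: sqrt_series_def sqrt_coeff_0[OF G])
  have lc_inverse_sqrt: "lc_inverse (lr_sqrt c) = inv_series G (sqrt_series G c)"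
    if "supported_in G c" "Re (c 0) > 0" "\<And>q. Im (c q) = 0" for c
    using lr_sqrt_eq_sqrt_series[OF G that] lc_inverse_eq_inv_series[OF G supported_in_sqrt_series sqrt0]
      that(2) by simp
  have "eventually (\<lambda>k. Re (a k 0) > 0) sequentially"
    using order_tendstoD(1)[OF tendsto_Re[OF t[of 0]] b0] .
  then have ev: "eventually (\<lambda>k. inv_series G (sqrt_series G (a k)) = lc_inverse (lr_sqrt (a k))) sequentially"
    by eventually_elim (simp add: lc_inverse_sqrt aG a_real)
  have "\<And>q. (\<lambda>k. sqrt_series G (a k) q) \<longlonglongrightarrow> sqrt_series G b q"
    unfolding sqrt_series_def by (intro tendsto_of_real tendsto_sqrt_coeff[where a=a and b=b, OF G t b0])
  from tendsto_inv_coeff[where a="\<lambda>k. sqrt_series G (a k)" and b="sqrt_series G b", OF G this sqrt0[of b, OF b0]]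
  have "(\<lambda>k. inv_series G (sqrt_series G (a k)) q) \<longlonglongrightarrow> inv_series G (sqrt_series G b) q" for q
    unfolding inv_series_def .
  then have "wk_conv (\<lambda>k. inv_series G (sqrt_series G (a k))) (inv_series G (sqrt_series G b))"
    by (intro wk_conv_if_coeff_tendsto[OF G] supported_in_inv_series always_eventually allI)
  then show ?thesis
    unfolding lc_inverse_sqrt[of b, OF bG b0 b_real] by (rule wk_conv_cong_eventually[OF _ ev])
qed

section \<open>Absolute values and vector norms\<close>

definition lc_shift :: "lcf \<Rightarrow> rat \<Rightarrow> lcf" where
  "lc_shift a s = (\<lambda>q. a (q - s))"

lemma lc_mult_shift: "lc_mult (lc_shift f s) (lc_shift g t) = lc_shift (lc_mult f g) (s + t)"
proof
  fix q
  show "lc_mult (lc_shift f s) (lc_shift g t) q = lc_shift (lc_mult f g) (s + t) q"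
    unfolding lc_mult_def lc_shift_def
    by (rule sum.reindex_bij_witness[where i="\<lambda>p. p + s" and j="\<lambda>p. p - s"]) (auto simp: algebra_simps)
qed

lemma is_LC_shift: assumes "is_LC a" shows "is_LC (lc_shift a s)"
  unfolding is_LC_def left_finite_def
proof
  fix r
  have "{q \<in> lsupp (lc_shift a s). q < r} = (\<lambda>q. q + s) ` {q \<in> lsupp a. q < r - s}"
    unfolding lsupp_def lc_shift_def by (auto simp: image_iff intro!: exI[of _ "x - s" for x])
  then show "finite {q \<in> lsupp (lc_shift a s). q < r}"
    using assms unfolding is_LC_def left_finite_def by simp
qed

lemma lc_shift_sqrt_series:
  fixes s :: rat
  assumes G: "lf_monoid G" and c: "supported_in G c" "Re (c 0) > 0" "\<And>q. Im (c q) = 0"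
  defines "y \<equiv> lc_shift (sqrt_series G c) s"
  shows "is_LR y" "lr_nonneg y" "lc_mult y y = lc_shift c (s + s)"
    "\<And>q. y q \<noteq> 0 \<Longrightarrow> s \<le> q" "y s = of_real (sqrt (Re (c 0)))"
proof -
  show "lc_mult y y = lc_shift c (s + s)"
    unfolding y_def lc_mult_shift lc_mult_sqrt_series_self[OF G c] ..
  show "is_LR y" unfolding is_LR_def y_def
    using is_LC_shift[OF supported_in_is_LC[OF G supported_in_sqrt_series]]
    by (simp add: lc_shift_def sqrt_series_def)
  show ys: "y s = of_real (sqrt (Re (c 0)))"
    by (simp add: y_def lc_shift_def sqrt_series_def sqrt_coeff_0[OF G])
  show supp: "s \<le> q" if "y q \<noteq> 0" for q
  proof -
    have "q - s \<in> G"
      using that supported_in_outside[OF supported_in_sqrt_series, of "q - s" G c]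
      by (auto simp: y_def lc_shift_def)
    then show "s \<le> q" using G by (auto simp: lf_monoid_def)
  qed
  have "y s \<noteq> 0" using ys c(2) by simp
  moreover from this have "lam y = s" using lam_eqI supp by blast
  ultimately show "lr_nonneg y" unfolding lr_nonneg_def lr_pos_def using ys c(2) by (auto simp: lc_zero_def)
qed

lemma lr_sqrt_props:
  assumes b: "is_LR b" "at_most_finite b" "lr_nonneg b"
  shows "is_LR (lr_sqrt b)" "at_most_finite (lr_sqrt b)" "lc_mult (lr_sqrt b) (lr_sqrt b) = b"
    "lr_sqrt b 0 = of_real (sqrt (Re (b 0)))"
proof -
  have "\<exists>y. lr_sqrt b = y \<and> is_LR y \<and> at_most_finite y \<and> lc_mult y y = b \<and> y 0 = of_real (sqrt (Re (b 0)))"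
  proof (cases "b = lc_zero")
    case True
    have zz: "lc_mult lc_zero lc_zero = lc_zero" by (rule lc_mult_zero_left)
    have LR0: "is_LR lc_zero" by (auto simp: is_LR_def is_LC_def lsupp_def lc_zero_def left_finite_def)
    have "lr_sqrt lc_zero = lc_zero" using lr_sqrt_eqI[OF LR0 _ zz] by (simp add: lr_nonneg_def)
    moreover have "at_most_finite lc_zero" "lc_zero 0 = of_real (sqrt (Re (lc_zero 0)))"
      by (simp_all add: at_most_finite_def lc_zero_def)
    ultimately show ?thesis unfolding True using zz LR0 by blast
  next
    case False
    have bLC: "is_LC b" and b_real: "\<And>q. Im (b q) = 0" using b(1) by (auto simp: is_LR_def)
    define l where "l = lam b"
    have bl: "b l \<noteq> 0" "\<And>q. b q \<noteq> 0 \<Longrightarrow> l \<le> q" using lam_least[OF bLC False] l_def by auto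
    have l0: "0 \<le> l" using bl(1) b(2) by (auto simp: at_most_finite_def)
    have blpos: "Re (b l) > 0" using b(3) False by (auto simp: lr_nonneg_def lr_pos_def l_def)
    \<comment> \<open>shift the leading term of \<open>b\<close> to degree 0, take the square root there, and shift back by \<open>l/2\<close>\<close>
    define c where "c = lc_shift b (- l)"
    have cnn: "\<forall>x\<in>lsupp c. 0 \<le> x" using bl(2) by (force simp: c_def lc_shift_def lsupp_def)
    define G where "G = add_monoid_gen (lsupp c)"
    have G: "lf_monoid G"
      unfolding G_def using lf_monoid_add_monoid_gen is_LC_shift[OF bLC] cnn by (auto simp: is_LC_def c_def)
    have cG: "supported_in G c" unfolding supported_in_def G_def by (rule subset_add_monoid_gen)
    have c0: "Re (c 0) > 0" using blpos by (simp add: c_def lc_shift_def)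
    have c_real: "\<And>q. Im (c q) = 0" using b_real by (simp add: c_def lc_shift_def)
    define y where "y = lc_shift (sqrt_series G c) (l / 2)"
    note y = lc_shift_sqrt_series[OF G cG c0 c_real, of "l / 2", folded y_def]
    have yy: "lc_mult y y = b" using y(3) by (simp add: c_def lc_shift_def)
    have "lr_sqrt b = y" by (rule lr_sqrt_eqI[OF y(1,2) yy])
    moreover have "at_most_finite y"
    proof -
      have "0 \<le> l / 2" using l0 by simp
      then show ?thesis unfolding at_most_finite_def using y(4) order.trans by blast
    qed
    moreover have "y 0 = of_real (sqrt (Re (b 0)))"
    proof (cases "l = 0")
      case True then show ?thesis using y(5) by (simp add: c_def lc_shift_def)
    next
      case False
      then have "l > 0" using l0 by simp
      then have "b 0 = 0" and "y 0 = 0" using bl(2)[of 0] y(4)[of 0] by force+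
      then show ?thesis by simp
    qed
    ultimately show ?thesis using y(1) yy by blast
  qed
  then obtain y where "lr_sqrt b = y" "is_LR y" "at_most_finite y" "lc_mult y y = b"
    "y 0 = of_real (sqrt (Re (b 0)))" by blast
  then show "is_LR (lr_sqrt b)" "at_most_finite (lr_sqrt b)" "lc_mult (lr_sqrt b) (lr_sqrt b) = b"
    "lr_sqrt b 0 = of_real (sqrt (Re (b 0)))" by simp_all
qed

definition lc_norm_sq :: "lcf \<Rightarrow> lcf" where
  "lc_norm_sq z = lc_add (lc_mult (lc_re z) (lc_re z)) (lc_mult (lc_im z) (lc_im z))"

lemma lc_abs_eq_sqrt_norm_sq: "lc_abs z = lr_sqrt (lc_norm_sq z)"
  by (simp add: lc_abs_def lc_norm_sq_def)

lemma supported_in_norm_sq: "lf_monoid G \<Longrightarrow> supported_in G z \<Longrightarrow> supported_in G (lc_norm_sq z)"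
  unfolding lc_norm_sq_def by (intro supported_in_add supported_in_mult supported_in_re supported_in_im)

lemma Im_lc_norm_sq: "Im (lc_norm_sq z q) = 0"
  unfolding lc_norm_sq_def lc_add_def
  using Im_lc_mult_eq_0[of "lc_re z" "lc_re z"] Im_lc_mult_eq_0[of "lc_im z" "lc_im z"]
  by (simp add: lc_re_def lc_im_def)

lemma of_real_cmod_sq:
  "complex_of_real ((cmod w)\<^sup>2) = of_real (Re w) * of_real (Re w) + of_real (Im w) * of_real (Im w)"
  unfolding cmod_power2 by (simp add: power2_eq_square)

lemma lc_norm_sq_0:
  assumes "lf_monoid G" "supported_in G z" shows "lc_norm_sq z 0 = of_real ((cmod (z 0))\<^sup>2)"
  unfolding lc_norm_sq_def lc_add_def of_real_cmod_sq
  using lc_mult_coeff_0[OF assms(1) supported_in_re[OF assms(2)] supported_in_re[OF assms(2)]]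
    lc_mult_coeff_0[OF assms(1) supported_in_im[OF assms(2)] supported_in_im[OF assms(2)]]
  by (simp add: lc_re_def lc_im_def)

lemma tendsto_lc_norm_sq_coeff:
  assumes G: "lf_monoid G" and vG: "\<And>k. supported_in G (v k)" "supported_in G z"
    and t: "\<And>q. (\<lambda>k. v k q) \<longlonglongrightarrow> z q"
  shows "(\<lambda>k. lc_norm_sq (v k) q) \<longlonglongrightarrow> lc_norm_sq z q"
proof -
  have "\<And>q. (\<lambda>k. lc_re (v k) q) \<longlonglongrightarrow> lc_re z q" "\<And>q. (\<lambda>k. lc_im (v k) q) \<longlonglongrightarrow> lc_im z q"
    unfolding lc_re_def lc_im_def by (intro tendsto_of_real tendsto_Re tendsto_Im t)+
  then show ?thesis
    unfolding lc_norm_sq_def lc_add_def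
    by (intro tendsto_add tendsto_lc_mult_coeff[OF G] supported_in_re supported_in_im vG)
qed

lemma lr_nonneg_lc_norm_sq: assumes "is_LC z" shows "lr_nonneg (lc_norm_sq z)"
proof (cases "z = lc_zero")
  case True
  then have "lc_norm_sq z = lc_zero"
    using lc_mult_nonzeroD[of "lc_re z" "lc_re z"] lc_mult_nonzeroD[of "lc_im z" "lc_im z"]
    by (auto simp: lc_norm_sq_def lc_add_def lc_re_def lc_im_def lc_zero_def fun_eq_iff)
  then show ?thesis by (simp add: lr_nonneg_def)
next
  case False
  define l where "l = lam z"
  have zl: "z l \<noteq> 0" "\<And>q. z q \<noteq> 0 \<Longrightarrow> l \<le> q" using lam_least[OF assms False] l_def by auto
  have "\<forall>p<l. z p = 0" using zl(2) not_le by blast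
  then have lo: "\<forall>p<l. lc_re z p = 0" "\<forall>p<l. lc_im z p = 0" by (auto simp: lc_re_def lc_im_def)
  have low: "\<And>q. q < l + l \<Longrightarrow> lc_norm_sq z q = 0"
    unfolding lc_norm_sq_def lc_add_def
    using lc_mult_below_orders[OF lo(1) lo(1)] lc_mult_below_orders[OF lo(2) lo(2)] by simp
  have top: "lc_norm_sq z (l + l) = of_real ((cmod (z l))\<^sup>2)"
    unfolding lc_norm_sq_def lc_add_def lc_mult_at_orders[OF lo(1) lo(1)] lc_mult_at_orders[OF lo(2) lo(2)]
      of_real_cmod_sq
    by (simp add: lc_re_def lc_im_def)
  have pos: "(cmod (z l))\<^sup>2 > 0" using zl(1) by simp
  have "lam (lc_norm_sq z) = l + l"
    by (rule lam_eqI) (use top pos low in \<open>auto simp: not_less[symmetric]\<close>)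
  moreover have "lc_norm_sq z \<noteq> lc_zero"
  proof
    assume "lc_norm_sq z = lc_zero"
    then have "lc_norm_sq z (l + l) = 0" by (simp add: lc_zero_def)
    then show False using top pos by simp
  qed
  ultimately show ?thesis unfolding lr_nonneg_def lr_pos_def using top pos by simp
qed

lemma lc_abs_props:
  assumes z: "is_LC z" "at_most_finite z"
  shows "at_most_finite (lc_abs z)" "lc_mult (lc_abs z) (lc_abs z) = lc_norm_sq z"
    "lc_abs z 0 = of_real (cmod (z 0))"
proof -
  obtain G where G: "lf_monoid G" and zG: "supported_in G z"
    using obtain_lf_monoid_supporting[of "{z}"] z by auto
  have nG: "supported_in G (lc_norm_sq z)" by (rule supported_in_norm_sq[OF G zG])
  have "is_LR (lc_norm_sq z)" "at_most_finite (lc_norm_sq z)" "lr_nonneg (lc_norm_sq z)"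
    using supported_in_is_LC[OF G nG] supported_in_at_most_finite[OF G nG] Im_lc_norm_sq
      lr_nonneg_lc_norm_sq[OF z(1)] by (auto simp: is_LR_def)
  from lr_sqrt_props[OF this] show "at_most_finite (lc_abs z)" "lc_mult (lc_abs z) (lc_abs z) = lc_norm_sq z"
    "lc_abs z 0 = of_real (cmod (z 0))"
    by (simp_all add: lc_abs_eq_sqrt_norm_sq lc_norm_sq_0[OF G zG])
qed

lemma vnorm2_eq_sqrt_sum_norm_sq:
  assumes "\<And>i. i \<in> {1..n} \<Longrightarrow> is_LC (z i) \<and> at_most_finite (z i)"
  shows "vnorm2 n z = lr_sqrt (lc_sum (\<lambda>i. lc_norm_sq (z i)) {1..n})"
  unfolding vnorm2_def using assms
  by (intro arg_cong[where f=lr_sqrt] lc_sum_cong lc_abs_props(2)) auto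

lemma vnorm_max_eq_dominant:
  assumes z: "\<And>i. i \<in> {1..n} \<Longrightarrow> is_LC (z i) \<and> at_most_finite (z i)"
    and i0: "i0 \<in> {1..n}" and lt: "\<And>i. i \<in> {1..n} \<Longrightarrow> i \<noteq> i0 \<Longrightarrow> cmod (z i 0) < cmod (z i0 0)"
  shows "vnorm_max n z = lc_abs (z i0)"
proof -
  \<comment> \<open>a difference of absolute values with nonzero constant term has order 0, so its sign is
    that of the constant term\<close>
  have diff: "lam (lc_diff (lc_abs (z j)) (lc_abs (z i))) = 0
      \<and> lc_diff (lc_abs (z j)) (lc_abs (z i)) 0 = of_real (cmod (z j 0) - cmod (z i 0))"
    if "i \<in> {1..n}" "j \<in> {1..n}" "cmod (z i 0) \<noteq> cmod (z j 0)" for i j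
  proof -
    let ?d = "lc_diff (lc_abs (z j)) (lc_abs (z i))"
    have d0: "?d 0 = of_real (cmod (z j 0) - cmod (z i 0))"
      using lc_abs_props(3) z that by (simp add: lc_diff_def)
    then have "?d 0 \<noteq> 0" using that(3) by simp
    moreover have "at_most_finite ?d" using lc_abs_props(1) z that at_most_finite_diff by blast
    ultimately show ?thesis using lam_eq_0 d0 by blast
  qed
  have pos: "lr_pos (lc_diff (lc_abs (z i0)) (lc_abs (z i)))" if "i \<in> {1..n}" "i \<noteq> i0" for i
    using diff[OF that(1) i0] lt[OF that] unfolding lr_pos_def by (auto simp: lc_zero_def)
  have not_nonneg: "\<not> lr_nonneg (lc_diff (lc_abs (z i)) (lc_abs (z i0)))" if "i \<in> {1..n}" "i \<noteq> i0" for i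
    using diff[OF i0 that(1)] lt[OF that] unfolding lr_nonneg_def lr_pos_def by (auto simp: lc_zero_def)
  show ?thesis unfolding vnorm_max_def
  proof (rule the_equality)
    have "lr_le (lc_abs (z i)) (lc_abs (z i0))" if "i \<in> {1..n}" for i
    proof (cases "i = i0")
      case True then show ?thesis by (simp add: lr_le_def lr_nonneg_def lc_diff_def lc_zero_def)
    next
      case False then show ?thesis using pos[OF that False] by (simp add: lr_le_def lr_nonneg_def)
    qed
    then show "(\<exists>i\<in>{1..n}. lc_abs (z i0) = lc_abs (z i)) \<and> (\<forall>i\<in>{1..n}. lr_le (lc_abs (z i)) (lc_abs (z i0)))"
      using i0 by blast
  next
    fix m assume m: "(\<exists>i\<in>{1..n}. m = lc_abs (z i)) \<and> (\<forall>i\<in>{1..n}. lr_le (lc_abs (z i)) m)"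
    then obtain i where i: "i \<in> {1..n}" "m = lc_abs (z i)" by blast
    then show "m = lc_abs (z i0)" using m not_nonneg i0 unfolding lr_le_def by blast
  qed
qed

lemma unique_Max_obtains_strict:
  fixes f :: "'a \<Rightarrow> 'b :: linorder"
  assumes "finite I" "\<exists>!i0. i0 \<in> I \<and> f i0 = Max {f i | i. i \<in> I}"
  obtains i0 where "i0 \<in> I" "\<And>i. i \<in> I \<Longrightarrow> i \<noteq> i0 \<Longrightarrow> f i < f i0"
proof -
  obtain i0 where i0: "i0 \<in> I" "f i0 = Max {f i | i. i \<in> I}"
    and uniq: "\<And>i. i \<in> I \<Longrightarrow> f i = Max {f i | i. i \<in> I} \<Longrightarrow> i = i0"
    using assms(2) by blast
  have "f i < f i0" if "i \<in> I" "i \<noteq> i0" for i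
  proof -
    have "f i \<le> f i0" unfolding i0(2) using assms(1) that(1) by (intro Max_ge) auto
    moreover have "f i \<noteq> f i0" using uniq[OF that(1)] i0(2) that(2) by auto
    ultimately show ?thesis by simp
  qed
  with i0(1) show ?thesis by (rule that)
qed

lemma wk_conv_inverse_vnorm2:
  assumes G: "lf_monoid G"
    and vG: "\<And>k i. i \<in> {1..n} \<Longrightarrow> supported_in G (v k i)"
    and zG: "\<And>i. i \<in> {1..n} \<Longrightarrow> supported_in G (z i)"
    and t: "\<And>i q. i \<in> {1..n} \<Longrightarrow> (\<lambda>k. v k i q) \<longlonglongrightarrow> z i q"
    and nz: "\<exists>i\<in>{1..n}. z i 0 \<noteq> 0"
  shows "wk_conv (\<lambda>k. lc_inverse (vnorm2 n (v k))) (lc_inverse (vnorm2 n z))"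
proof -
  let ?S = "\<lambda>y. lc_sum (\<lambda>i. lc_norm_sq (y i)) {1..n}"
  have norm: "vnorm2 n y = lr_sqrt (?S y)" if "\<And>i. i \<in> {1..n} \<Longrightarrow> supported_in G (y i)" for y
    using that supported_in_is_LC[OF G] supported_in_at_most_finite[OF G]
    by (intro vnorm2_eq_sqrt_sum_norm_sq) blast
  have SG: "supported_in G (?S y)" if "\<And>i. i \<in> {1..n} \<Longrightarrow> supported_in G (y i)" for y
    using that by (intro supported_in_sum supported_in_norm_sq[OF G])
  have S_real: "Im (?S y q) = 0" for y q
    unfolding lc_sum_def by (simp add: Im_sum Im_lc_norm_sq)
  obtain i1 where i1: "i1 \<in> {1..n}" "z i1 0 \<noteq> 0" using nz by blast
  have "Re (?S z 0) = (\<Sum>i\<in>{1..n}. (cmod (z i 0))\<^sup>2)"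
    unfolding lc_sum_def Re_sum using lc_norm_sq_0[OF G zG] by simp
  also have "\<dots> > 0" using i1 by (intro sum_pos2[where i=i1]) auto
  finally have pos: "Re (?S z 0) > 0" .
  have lim: "(\<lambda>k. ?S (v k) q) \<longlonglongrightarrow> ?S z q" for q
    unfolding lc_sum_def by (intro tendsto_sum tendsto_lc_norm_sq_coeff[OF G] vG zG t)
  have "wk_conv (\<lambda>k. lc_inverse (lr_sqrt (?S (v k)))) (lc_inverse (lr_sqrt (?S z)))"
    by (rule wk_conv_inverse_sqrt[OF G SG[OF vG] SG[OF zG] lim pos S_real S_real])
  then show ?thesis using norm vG zG by simp
qed

lemma wk_conv_inverse_vnorm_max:
  assumes G: "lf_monoid G"
    and vG: "\<And>k i. i \<in> {1..n} \<Longrightarrow> supported_in G (v k i)"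
    and zG: "\<And>i. i \<in> {1..n} \<Longrightarrow> supported_in G (z i)"
    and t: "\<And>i q. i \<in> {1..n} \<Longrightarrow> (\<lambda>k. v k i q) \<longlonglongrightarrow> z i q"
    and nz: "\<exists>i\<in>{1..n}. z i 0 \<noteq> 0"
    and max: "\<exists>!i0. i0 \<in> {1..n} \<and> cmod (z i0 0) = Max {cmod (z i 0) | i. i \<in> {1..n}}"
  shows "wk_conv (\<lambda>k. lc_inverse (vnorm_max n (v k))) (lc_inverse (vnorm_max n z))"
proof -
  obtain i0 where i0: "i0 \<in> {1..n}" and lt: "\<And>i. i \<in> {1..n} \<Longrightarrow> i \<noteq> i0 \<Longrightarrow> cmod (z i 0) < cmod (z i0 0)"
    using unique_Max_obtains_strict[of "{1..n}" "\<lambda>i. cmod (z i 0)"] max by auto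
  have "z i0 0 \<noteq> 0" using nz lt by (metis norm_eq_zero norm_ge_zero not_less)
  then have pos: "Re (lc_norm_sq (z i0) 0) > 0" using lc_norm_sq_0[OF G zG[OF i0]] by simp
  have z_fin: "\<And>i. i \<in> {1..n} \<Longrightarrow> is_LC (z i) \<and> at_most_finite (z i)"
    and v_fin: "\<And>k i. i \<in> {1..n} \<Longrightarrow> is_LC (v k i) \<and> at_most_finite (v k i)"
    using zG vG supported_in_is_LC[OF G] supported_in_at_most_finite[OF G] by blast+
  have "eventually (\<lambda>k. cmod (v k i 0) < cmod (v k i0 0)) sequentially" if "i \<in> {1..n} - {i0}" for i
  proof -
    have "(\<lambda>k. cmod (v k i0 0) - cmod (v k i 0)) \<longlonglongrightarrow> cmod (z i0 0) - cmod (z i 0)"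
      using that i0 by (intro tendsto_diff tendsto_norm t) auto
    moreover have "0 < cmod (z i0 0) - cmod (z i 0)" using that lt by simp
    ultimately show ?thesis by (rule order_tendstoD(1)[THEN eventually_mono]) simp
  qed
  then have "eventually (\<lambda>k. \<forall>i\<in>{1..n} - {i0}. cmod (v k i 0) < cmod (v k i0 0)) sequentially"
    by (intro eventually_ball_finite) auto
  then have ev: "eventually (\<lambda>k. lc_inverse (lr_sqrt (lc_norm_sq (v k i0))) = lc_inverse (vnorm_max n (v k)))
      sequentially"
  proof eventually_elim
    case (elim k)
    have "vnorm_max n (v k) = lc_abs (v k i0)"
      by (rule vnorm_max_eq_dominant[of n "v k" i0, OF v_fin i0]) (use elim in auto)
    then show ?case by (simp add: lc_abs_eq_sqrt_norm_sq)
  qed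
  have "wk_conv (\<lambda>k. lc_inverse (lr_sqrt (lc_norm_sq (v k i0)))) (lc_inverse (lr_sqrt (lc_norm_sq (z i0))))"
    by (rule wk_conv_inverse_sqrt[OF G supported_in_norm_sq[OF G vG[OF i0]] supported_in_norm_sq[OF G zG[OF i0]]
          tendsto_lc_norm_sq_coeff[OF G vG[OF i0] zG[OF i0] t[OF i0]] pos Im_lc_norm_sq Im_lc_norm_sq])
  then have "wk_conv (\<lambda>k. lc_inverse (vnorm_max n (v k))) (lc_inverse (lr_sqrt (lc_norm_sq (z i0))))"
    by (rule wk_conv_cong_eventually[OF _ ev])
  moreover have "vnorm_max n z = lr_sqrt (lc_norm_sq (z i0))"
    using vnorm_max_eq_dominant[of n z i0, OF z_fin i0 lt] by (simp add: lc_abs_eq_sqrt_norm_sq)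
  ultimately show ?thesis by (simp only:)
qed

lemma le_first_if_decreasing:
  fixes f :: "nat \<Rightarrow> 'a :: order"
  assumes "\<And>j. m \<le> j \<Longrightarrow> j < n \<Longrightarrow> f (j + 1) \<le> f j" "m \<le> j" "j \<le> n"
  shows "f j \<le> f m"
  using assms(2,3)
proof (induction rule: dec_induct)
  case (step k)
  have "f (Suc k) \<le> f k" using assms(1)[of k] step.hyps(1) step.prems by simp
  also have "f k \<le> f m" using step.IH step.prems by simp
  finally show ?case .
qed simp

theorem mainTheorem7:
  fixes n :: nat
    and A :: "nat \<Rightarrow> nat \<Rightarrow> lcf"
    and \<nu> :: "nat \<Rightarrow> lcf"
    and x :: "nat \<Rightarrow> lcf"
    and w :: "nat \<Rightarrow> nat \<Rightarrow> lcf"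
    and \<xi> :: "nat \<Rightarrow> nat \<Rightarrow> lcf"
  assumes n1: "n \<ge> 1"
    and A_LC: "is_LC_mat n A"
    and nu_LC: "\<forall>j\<in>{1..n}. is_LC (\<nu> j)"
    and diag: "diagonalizable_with n A \<nu>"
    and nu_fin: "\<forall>j\<in>{1..n}. at_most_finite (\<nu> j)"
    and nu1: "\<nu> 1 0 = 1"
    and nu2: "n \<ge> 2 \<longrightarrow> cmod (\<nu> 2 0) < 1"
    and nu_dec: "\<forall>j. 2 \<le> j \<and> j < n \<longrightarrow> cmod (\<nu> (j + 1) 0) \<le> cmod (\<nu> j 0)"
    and x_LC: "\<forall>i\<in>{1..n}. is_LC (x i)"
    and w_LC: "\<forall>j\<in>{1..n}. \<forall>i\<in>{1..n}. is_LC (w j i)"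
    and x_sum: "\<forall>i\<in>{1..n}. x i = lc_sum (\<lambda>j. w j i) {1..n}"
    and w_eig: "\<forall>j\<in>{1..n}. \<forall>i\<in>{1..n}. mat_vec n A (w j) i = lc_mult (\<nu> j) (w j i)"
    and w_fin: "\<forall>j\<in>{1..n}. \<forall>i\<in>{1..n}. at_most_finite (w j i)"
    and w1_nz: "\<exists>i\<in>{1..n}. w 1 i 0 \<noteq> 0"
    and xi_def: "\<forall>k i. \<xi> k i = lc_sum (\<lambda>j. lc_mult (lc_pow (lc_divide (\<nu> j) (\<nu> 1)) k) (w j i)) {2..n}"
  shows "(\<forall>i\<in>{1..n}. regular_seq (\<lambda>k. \<xi> k i) \<and> wk_conv (\<lambda>k. \<xi> k i) lc_zero)
       \<and> wk_conv (\<lambda>k. lc_inverse (vnorm2 n (\<lambda>i. lc_add (w 1 i) (\<xi> k i))))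
                 (lc_inverse (vnorm2 n (w 1)))
       \<and> ((\<exists>!i0. i0 \<in> {1..n} \<and> cmod (w 1 i0 0) = Max {cmod (w 1 i 0) | i. i \<in> {1..n}})
           \<longrightarrow> wk_conv (\<lambda>k. lc_inverse (vnorm_max n (\<lambda>i. lc_add (w 1 i) (\<xi> k i))))
                       (lc_inverse (vnorm_max n (w 1))))"
proof -
  obtain G where G: "lf_monoid G"
    and FG: "\<And>a. a \<in> \<nu> ` {1..n} \<union> (\<Union>j\<in>{1..n}. w j ` {1..n}) \<Longrightarrow> supported_in G a"
    by (rule obtain_lf_monoid_supporting[of "\<nu> ` {1..n} \<union> (\<Union>j\<in>{1..n}. w j ` {1..n})"])
      (use nu_LC nu_fin w_LC w_fin in auto)
  have nuG: "supported_in G (\<nu> j)" if "j \<in> {1..n}" for j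
    using that by (intro FG) auto
  have wG: "supported_in G (w j i)" if "j \<in> {1..n}" "i \<in> {1..n}" for j i
    by (rule FG) (use that in blast)
  have "cmod (\<nu> j 0) < 1" if "j \<in> {2..n}" for j
    using le_first_if_decreasing[of 2 n "\<lambda>j. cmod (\<nu> j 0)" j] nu_dec nu2 that by force
  then have u: "supported_in G (lc_divide (\<nu> j) (\<nu> 1)) \<and> cmod (lc_divide (\<nu> j) (\<nu> 1) 0) < 1"
    if "j \<in> {2..n}" for j
    using lc_divide_supported_in[OF G nuG[of j] nuG[of 1]] nu1 n1 that by simp
  have xi: "supported_in G (\<xi> k i)" "(\<lambda>k. \<xi> k i q) \<longlonglongrightarrow> 0"
    "regular_seq (\<lambda>k. \<xi> k i)" "wk_conv (\<lambda>k. \<xi> k i) lc_zero" if "i \<in> {1..n}" for k i q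
    unfolding xi_def[rule_format]
    using lc_power_combination_vanishes[where u="\<lambda>j. lc_divide (\<nu> j) (\<nu> 1)" and J="{2..n}"
        and w="\<lambda>j. w j i", OF G u] wG that by auto
  have w1G: "supported_in G (w 1 i)" if "i \<in> {1..n}" for i
    using n1 wG that by simp
  have vG: "supported_in G (lc_add (w 1 i) (\<xi> k i))" if "i \<in> {1..n}" for k i
    using w1G xi that by (intro supported_in_add) auto
  have v_lim: "(\<lambda>k. lc_add (w 1 i) (\<xi> k i) q) \<longlonglongrightarrow> w 1 i q" if "i \<in> {1..n}" for i q
    using tendsto_add[OF tendsto_const xi(2)[OF that]] by (simp add: lc_add_def)
  show ?thesis
  proof (intro conjI ballI impI)
    fix i assume "i \<in> {1..n}"
    then show "regular_seq (\<lambda>k. \<xi> k i)" "wk_conv (\<lambda>k. \<xi> k i) lc_zero" by (rule xi(3), rule xi(4))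
  next
    show "wk_conv (\<lambda>k. lc_inverse (vnorm2 n (\<lambda>i. lc_add (w 1 i) (\<xi> k i)))) (lc_inverse (vnorm2 n (w 1)))"
      by (rule wk_conv_inverse_vnorm2[where v="\<lambda>k i. lc_add (w 1 i) (\<xi> k i)" and z="w 1", OF G _ _ _ w1_nz])
        (fact vG w1G v_lim)+
  next
    assume max: "\<exists>!i0. i0 \<in> {1..n} \<and> cmod (w 1 i0 0) = Max {cmod (w 1 i 0) | i. i \<in> {1..n}}"
    show "wk_conv (\<lambda>k. lc_inverse (vnorm_max n (\<lambda>i. lc_add (w 1 i) (\<xi> k i))))
        (lc_inverse (vnorm_max n (w 1)))"
      by (rule wk_conv_inverse_vnorm_max[where v="\<lambda>k i. lc_add (w 1 i) (\<xi> k i)" and z="w 1",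
            OF G _ _ _ w1_nz max]) (fact vG w1G v_lim)+
  qed
qed

end
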